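(* Let $F$ be a real quadratic field, let $k_1,k_2$ be integers and let $g:\mathbb{H}^2\to\mathbb{C}$ be a smooth Hilbert modular form of weight $(k_1,k_2)$ for some congruence subgroup of $\operatorname{SL}_2(F)$. Assume that, as a function of the first variable, $g$ is annihilated by $\Delta_{k_1}$ and, as a function of the second variable, $g$ is annihilated by $\Delta_{k_2}$. Then for every non-negative integer $j$, \[ (-4\pi)^jL(\mathcal{C}_j(g))=\binom{k_2+j-1}{j}(R^j_{k_1,1}L_{k_2,2}g)(\tau,\tau)+(-1)^j\binom{k_1+j-1}{j}(L_{k_1,1}R^j_{k_2,2}g)(\tau,\tau). \]
   Context: For $\tau=u+iv$: $R_k=2i\partial_\tau+kv^{-1}$, $L=L_k=-2iv^2\partial_{\bar\tau}$, $R^j_k=R_{k+2j-2}\circ\cdots\circ R_k$, $\Delta_k=-v^2(\partial_u^2+\partial_v^2)+ikv(\partial_u+i\partial_v)$. $R_{k,i}$, $L_{k,i}$ and $R^j_{k,i}$ denote these operators acting in the variable $\tau_i$ of $(\tau_1,\tau_2)\in\mathbb{H}^2$. The $j$-th Cohen operator is $\mathcal{C}_j(g)(\tau)=(2\pi i)^{-j}\sum_{s=0}^j(-1)^s\binom{k_1+j-1}{s}\binom{k_2+j-1}{j-s}\left(\partial_{\tau_1}^{j-s}\partial_{\tau_2}^s g\right)(\tau,\tau)$, a function of $\tau\in\mathbb{H}$. Binomial coefficients $\binom{x}{s}=x(x-1)\cdots(x-s+1)/s!$. *)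

theory Defs
  imports "HOL-Analysis.Analysis" "HOL-Computational_Algebra.Squarefree"
begin

definition uhp :: "complex set" where "uhp = {z. Im z > 0}"

definition du :: "(complex \<Rightarrow> complex) \<Rightarrow> complex \<Rightarrow> complex" where
  "du f z = vector_derivative (\<lambda>t::real. f (z + of_real t)) (at 0)"
definition dv :: "(complex \<Rightarrow> complex) \<Rightarrow> complex \<Rightarrow> complex" where
  "dv f z = vector_derivative (\<lambda>t::real. f (z + \<i> * of_real t)) (at 0)"

definition dtau :: "(complex \<Rightarrow> complex) \<Rightarrow> complex \<Rightarrow> complex" where
  "dtau f z = (du f z - \<i> * dv f z) / 2"
definition dtaubar :: "(complex \<Rightarrow> complex) \<Rightarrow> complex \<Rightarrow> complex" where
  "dtaubar f z = (du f z + \<i> * dv f z) / 2"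

definition Rop :: "int \<Rightarrow> (complex \<Rightarrow> complex) \<Rightarrow> complex \<Rightarrow> complex" where
  "Rop k f z = 2 * \<i> * dtau f z + of_int k / of_real (Im z) * f z"
definition Lop :: "(complex \<Rightarrow> complex) \<Rightarrow> complex \<Rightarrow> complex" where
  "Lop f z = - 2 * \<i> * of_real ((Im z)^2) * dtaubar f z"

fun Rpow :: "nat \<Rightarrow> int \<Rightarrow> (complex \<Rightarrow> complex) \<Rightarrow> complex \<Rightarrow> complex" where
  "Rpow 0 k f = f"
| "Rpow (Suc j) k f = Rop (k + 2 * int j) (Rpow j k f)"

definition Delta :: "int \<Rightarrow> (complex \<Rightarrow> complex) \<Rightarrow> complex \<Rightarrow> complex" where
  "Delta k f z = - of_real ((Im z)^2) * (du (du f) z + dv (dv f) z)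
      + \<i> * of_int k * of_real (Im z) * (du f z + \<i> * dv f z)"

definition in1 :: "((complex \<Rightarrow> complex) \<Rightarrow> complex \<Rightarrow> complex)
    \<Rightarrow> (complex \<times> complex \<Rightarrow> complex) \<Rightarrow> complex \<times> complex \<Rightarrow> complex" where
  "in1 T g = (\<lambda>(z1, z2). T (\<lambda>z. g (z, z2)) z1)"
definition in2 :: "((complex \<Rightarrow> complex) \<Rightarrow> complex \<Rightarrow> complex)
    \<Rightarrow> (complex \<times> complex \<Rightarrow> complex) \<Rightarrow> complex \<times> complex \<Rightarrow> complex" where
  "in2 T g = (\<lambda>(z1, z2). T (\<lambda>z. g (z1, z)) z2)"

definition cohen :: "int \<Rightarrow> int \<Rightarrow> nat \<Rightarrow> (complex \<times> complex \<Rightarrow> complex) \<Rightarrow> complex \<Rightarrow> complex" where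
  "cohen k1 k2 j g z = (2 * of_real pi * \<i>) powi (- int j) *
     (\<Sum>s=0..j. (-1)^s * ((of_int (k1 + int j - 1) :: complex) gchoose s)
        * ((of_int (k2 + int j - 1) :: complex) gchoose (j - s))
        * ((in1 dtau ^^ (j - s)) ((in2 dtau ^^ s) g)) (z, z))"

text \<open>Iterated directional (Frechet) derivatives; C^infinity on an open set means
  all iterated directional derivatives exist (are differentiable) on the set.\<close>
fun diter :: "('a::real_normed_vector) list \<Rightarrow> ('a \<Rightarrow> 'b::real_normed_vector) \<Rightarrow> 'a \<Rightarrow> 'b" where
  "diter [] f = f"
| "diter (v # vs) f = (\<lambda>x. frechet_derivative (diter vs f) (at x) v)"

definition smooth_on :: "'a::real_normed_vector set \<Rightarrow> ('a \<Rightarrow> 'b::real_normed_vector) \<Rightarrow> bool" where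
  "smooth_on S f \<longleftrightarrow> (\<forall>vs. diter vs f differentiable_on S)"

text \<open>F = Q(sqrt d) for a squarefree integer d \<ge> 2, embedded in the reals by the
  first real embedding; the second embedding is the Galois conjugation.\<close>
definition real_quadratic_param :: "nat \<Rightarrow> bool" where
  "real_quadratic_param d \<longleftrightarrow> d \<ge> 2 \<and> squarefree d"

definition qf_elem :: "nat \<Rightarrow> real \<Rightarrow> bool" where
  "qf_elem d x \<longleftrightarrow> (\<exists>a b :: rat. x = of_rat a + of_rat b * sqrt (real d))"

definition qf_conj :: "nat \<Rightarrow> real \<Rightarrow> real" where
  "qf_conj d x = (THE y. \<exists>a b :: rat. x = of_rat a + of_rat b * sqrt (real d)
                          \<and> y = of_rat a - of_rat b * sqrt (real d))"

text \<open>Ring of integers O_F: elements whose minimal polynomial X^2 - tr X + N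
  has integer coefficients.\<close>
definition qf_int :: "nat \<Rightarrow> real \<Rightarrow> bool" where
  "qf_int d x \<longleftrightarrow> qf_elem d x \<and> x + qf_conj d x \<in> \<int> \<and> x * qf_conj d x \<in> \<int>"

text \<open>2x2 matrices (a, b, c, e) = [[a,b],[c,e]].\<close>
type_synonym mat2 = "real \<times> real \<times> real \<times> real"

definition mmul :: "mat2 \<Rightarrow> mat2 \<Rightarrow> mat2" where
  "mmul A B = (case A of (a, b, c, e) \<Rightarrow> case B of (a', b', c', e') \<Rightarrow>
      (a * a' + b * c', a * b' + b * e', c * a' + e * c', c * b' + e * e'))"
definition minv :: "mat2 \<Rightarrow> mat2" where
  "minv A = (case A of (a, b, c, e) \<Rightarrow> (e, - b, - c, a))"

definition SL2_OF :: "nat \<Rightarrow> mat2 set" where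
  "SL2_OF d = {(a, b, c, e). qf_int d a \<and> qf_int d b \<and> qf_int d c \<and> qf_int d e
                            \<and> a * e - b * c = 1}"

definition Gamma_princ :: "nat \<Rightarrow> nat \<Rightarrow> mat2 set" where
  "Gamma_princ d N = {(a, b, c, e) \<in> SL2_OF d. qf_int d ((a - 1) / N) \<and> qf_int d (b / N)
                        \<and> qf_int d (c / N) \<and> qf_int d ((e - 1) / N)}"

definition congruence_subgroup :: "nat \<Rightarrow> mat2 set \<Rightarrow> bool" where
  "congruence_subgroup d G \<longleftrightarrow> G \<subseteq> SL2_OF d \<and> (1, 0, 0, 1) \<in> G
     \<and> (\<forall>A\<in>G. \<forall>B\<in>G. mmul A B \<in> G) \<and> (\<forall>A\<in>G. minv A \<in> G)
     \<and> (\<exists>N > 0. Gamma_princ d N \<subseteq> G)"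

definition moebius :: "mat2 \<Rightarrow> complex \<Rightarrow> complex" where
  "moebius A z = (case A of (a, b, c, e) \<Rightarrow> (of_real a * z + of_real b) / (of_real c * z + of_real e))"

definition conjmat :: "nat \<Rightarrow> mat2 \<Rightarrow> mat2" where
  "conjmat d A = (case A of (a, b, c, e) \<Rightarrow> (qf_conj d a, qf_conj d b, qf_conj d c, qf_conj d e))"

definition jfac :: "mat2 \<Rightarrow> complex \<Rightarrow> complex" where
  "jfac A z = (case A of (a, b, c, e) \<Rightarrow> of_real c * z + of_real e)"

definition smooth_HMF :: "nat \<Rightarrow> int \<Rightarrow> int \<Rightarrow> mat2 set \<Rightarrow> (complex \<times> complex \<Rightarrow> complex) \<Rightarrow> bool" where
  "smooth_HMF d k1 k2 G g \<longleftrightarrow> smooth_on (uhp \<times> uhp) g \<and>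
     (\<forall>A\<in>G. \<forall>z1\<in>uhp. \<forall>z2\<in>uhp.
        g (moebius A z1, moebius (conjmat d A) z2)
          = jfac A z1 powi k1 * jfac (conjmat d A) z2 powi k2 * g (z1, z2))"

end

theory Submission
  imports Defs
begin

text \<open>
  Write \<open>d\<^sub>i\<close>, \<open>dbar\<^sub>i\<close> for the Wirtinger derivatives in \<open>\<tau>\<^sub>i\<close> and \<open>v\<^sub>i = Im \<tau>\<^sub>i\<close>.
  The Laplace equation \<open>\<Delta>\<^sub>k\<^sub>i g = 0\<close> in \<open>\<tau>\<^sub>i\<close> becomes \<open>d\<^sub>i dbar\<^sub>i g = (i k\<^sub>i / 2 v\<^sub>i) dbar\<^sub>i g\<close>,
  hence by induction \<open>dbar\<^sub>i d\<^sub>i\<^sup>m g = (i/2)\<^sup>m (k\<^sub>i)\<^sub>m v\<^sub>i\<^sup>-\<^sup>m dbar\<^sub>i g\<close>, and this survives derivatives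
  in the other variable because mixed partial derivatives commute. On the diagonal, \<open>L\<close> acts as
  \<open>-2i v\<^sup>2 (dbar\<^sub>1 + dbar\<^sub>2)\<close>, so \<open>L (C\<^sub>j g)\<close> becomes a combination of the terms
  \<open>v\<^sup>r\<^sup>-\<^sup>j d\<^sub>1\<^sup>r dbar\<^sub>2 g\<close> and \<open>v\<^sup>r\<^sup>-\<^sup>j d\<^sub>2\<^sup>r dbar\<^sub>1 g\<close>. On the other side
  \<open>R\<^sup>j\<^sub>k F = \<Sum>\<^sub>r (j choose r) (k + r)\<^sub>j\<^sub>-\<^sub>r (2i)\<^sup>r v\<^sup>r\<^sup>-\<^sup>j d\<^sup>r F\<close> for every smooth \<open>F\<close>, and
  \<open>L\<^sub>2 g = -2i v\<^sub>2\<^sup>2 dbar\<^sub>2 g\<close> with \<open>v\<^sub>2\<close> constant in \<open>\<tau>\<^sub>1\<close>. Comparing coefficients leaves the identity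
  \<open>(a+j-1 choose s) (b+j-1 choose j-s) (a)\<^sub>j\<^sub>-\<^sub>s = (a+j-1 choose j) (j choose s) (b+s)\<^sub>j\<^sub>-\<^sub>s\<close>.
\<close>

definition dir_deriv :: "'a::real_normed_vector \<Rightarrow> ('a \<Rightarrow> complex) \<Rightarrow> 'a \<Rightarrow> complex" where
  "dir_deriv v F = (\<lambda>x. frechet_derivative F (at x) v)"

lemma diter_Cons_dir_deriv: "diter (v # vs) F = dir_deriv v (diter vs F)"
  by (simp add: dir_deriv_def)

lemma dir_deriv_eq: "(F has_derivative F') (at x) \<Longrightarrow> dir_deriv v F x = F' v"
  by (simp add: dir_deriv_def flip: frechet_derivative_at)

lemma dir_deriv_cong_open:
  assumes "open U" "x \<in> U" "\<And>y. y \<in> U \<Longrightarrow> F y = G y"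
  shows "dir_deriv v F x = dir_deriv v G x"
proof -
  have "(F has_derivative F') (at x) \<longleftrightarrow> (G has_derivative F') (at x)" for F'
    using has_derivative_transform_within_open[OF _ assms(1,2)] assms(3) by metis
  then show ?thesis
    by (simp add: dir_deriv_def frechet_derivative_def)
qed

lemma differentiable_at_cong_open:
  assumes "open U" "x \<in> U" "\<And>y. y \<in> U \<Longrightarrow> F y = G y" "G differentiable at x"
  shows "F differentiable at x"
  using assms has_derivative_transform_within_open[OF _ assms(1,2)]
  unfolding differentiable_def by metis

lemma dir_deriv_lincomb:
  assumes "F differentiable at x" "G differentiable at x"
  shows "dir_deriv v (\<lambda>y. \<alpha> * F y + \<beta> * G y) x = \<alpha> * dir_deriv v F x + \<beta> * dir_deriv v G x"
proof -
  obtain F' G' where F: "(F has_derivative F') (at x)" and G: "(G has_derivative G') (at x)"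
    using assms unfolding differentiable_def by blast
  have "((\<lambda>y. \<alpha> * F y + \<beta> * G y) has_derivative (\<lambda>h. \<alpha> * F' h + \<beta> * G' h)) (at x)"
    using F G by (auto intro!: derivative_eq_intros)
  then show ?thesis
    using dir_deriv_eq F G by metis
qed

lemma dir_deriv_cmult:
  assumes "F differentiable at x"
  shows "dir_deriv v (\<lambda>y. c * F y) x = c * dir_deriv v F x"
  using dir_deriv_lincomb[OF assms assms, of v c 0] by simp

lemma dir_deriv_mult:
  assumes "F differentiable at x" "G differentiable at x"
  shows "dir_deriv v (\<lambda>y. F y * G y) x = dir_deriv v F x * G x + F x * dir_deriv v G x"
proof -
  obtain F' G' where F: "(F has_derivative F') (at x)" and G: "(G has_derivative G') (at x)"
    using assms unfolding differentiable_def by blast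
  have "((\<lambda>y. F y * G y) has_derivative (\<lambda>h. F x * G' h + F' h * G x)) (at x)"
    using F G by (auto intro!: derivative_eq_intros)
  then show ?thesis
    using dir_deriv_eq F G by (metis add.commute)
qed

lemma dir_deriv_sum:
  assumes "\<And>s. s \<in> S \<Longrightarrow> F s differentiable at x"
  shows "dir_deriv v (\<lambda>y. \<Sum>s\<in>S. F s y) x = (\<Sum>s\<in>S. dir_deriv v (F s) x)"
proof -
  have "((\<lambda>y. \<Sum>s\<in>S. F s y) has_derivative (\<lambda>h. \<Sum>s\<in>S. frechet_derivative (F s) (at x) h)) (at x)"
    by (intro has_derivative_sum) (use assms frechet_derivative_works in blast)
  from dir_deriv_eq[OF this, of v] show ?thesis
    by (simp add: dir_deriv_def)
qed

definition line_deriv :: "'a::real_normed_vector \<Rightarrow> ('a \<Rightarrow> complex) \<Rightarrow> 'a \<Rightarrow> complex" where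
  "line_deriv v M y = vector_derivative (\<lambda>t::real. M (y + t *\<^sub>R v)) (at 0)"

lemma has_derivative_along_line:
  assumes "F differentiable at (p + t *\<^sub>R v)"
  shows "((\<lambda>t. F (p + t *\<^sub>R v)) has_derivative (\<lambda>s. s *\<^sub>R dir_deriv v F (p + t *\<^sub>R v))) (at t within S)"
proof -
  have "((\<lambda>t. p + t *\<^sub>R v) has_derivative (\<lambda>s. s *\<^sub>R v)) (at t within S)"
    by (intro derivative_eq_intros) auto
  from has_derivative_compose[OF this frechet_derivative_works[THEN iffD1, OF assms]]
  show ?thesis
    using linear_frechet_derivative[OF assms] by (simp add: o_def linear_scale dir_deriv_def)
qed

lemma line_deriv_eq_dir_deriv:
  assumes "open S" "y \<in> S" "\<And>z. z \<in> S \<Longrightarrow> M z = E z" "E differentiable at y"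
  shows "line_deriv v M y = dir_deriv v E y"
proof -
  have "((\<lambda>t::real. E (y + t *\<^sub>R v)) has_vector_derivative dir_deriv v E y) (at 0)"
    using has_derivative_along_line[of E y 0 v] assms(4) by (simp add: has_vector_derivative_def)
  moreover have "open {t::real. y + t *\<^sub>R v \<in> S}"
    by (intro open_vimage[where f = "\<lambda>t. y + t *\<^sub>R v", unfolded vimage_def] assms continuous_intros)
  ultimately have "((\<lambda>t::real. M (y + t *\<^sub>R v)) has_vector_derivative dir_deriv v E y) (at 0)"
    by (rule has_vector_derivative_transform_within_open) (use assms in auto)
  then show ?thesis
    unfolding line_deriv_def by (rule vector_derivative_at)
qed

lemma diter_dir_deriv: "diter vs (dir_deriv v F) = diter (vs @ [v]) F"
  by (induction vs) (auto simp: dir_deriv_def)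

lemma smooth_on_dir_deriv: "smooth_on U F \<Longrightarrow> smooth_on U (dir_deriv v F)"
  unfolding smooth_on_def diter_dir_deriv by blast

lemma smooth_on_diter_differentiable:
  "open U \<Longrightarrow> smooth_on U F \<Longrightarrow> x \<in> U \<Longrightarrow> diter vs F differentiable at x"
  unfolding smooth_on_def using differentiable_on_eq_differentiable_at by blast

lemma smooth_on_differentiable:
  "open U \<Longrightarrow> smooth_on U F \<Longrightarrow> x \<in> U \<Longrightarrow> F differentiable at x"
  using smooth_on_diter_differentiable[of U F x "[]"] by simp

lemma diter_lincomb:
  fixes F G :: "'a::real_normed_vector \<Rightarrow> complex"
  assumes U: "open U" and F: "smooth_on U F" and G: "smooth_on U G" and x: "x \<in> U"
  shows "diter vs (\<lambda>y. \<alpha> * F y + \<beta> * G y) x = \<alpha> * diter vs F x + \<beta> * diter vs G x"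
  using x
proof (induction vs arbitrary: x)
  case (Cons v vs)
  have "diter (v # vs) (\<lambda>y. \<alpha> * F y + \<beta> * G y) x
        = dir_deriv v (\<lambda>y. \<alpha> * diter vs F y + \<beta> * diter vs G y) x"
    unfolding diter_Cons_dir_deriv by (rule dir_deriv_cong_open[OF U Cons.prems Cons.IH])
  also have "\<dots> = \<alpha> * diter (v # vs) F x + \<beta> * diter (v # vs) G x"
    unfolding diter_Cons_dir_deriv
    by (intro dir_deriv_lincomb smooth_on_diter_differentiable[OF U] F G Cons.prems)
  finally show ?case .
qed simp

lemma smooth_on_lincomb:
  fixes F G :: "'a::real_normed_vector \<Rightarrow> complex"
  assumes U: "open U" and F: "smooth_on U F" and G: "smooth_on U G"
  shows "smooth_on U (\<lambda>y. \<alpha> * F y + \<beta> * G y)"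
  unfolding smooth_on_def differentiable_on_eq_differentiable_at[OF U]
proof (intro allI ballI)
  fix vs x assume x: "x \<in> U"
  have lin: "(\<lambda>y. \<alpha> * diter vs F y + \<beta> * diter vs G y) differentiable at x"
    using smooth_on_diter_differentiable[OF U] F G x
    by (intro differentiable_add differentiable_mult differentiable_const) auto
  show "diter vs (\<lambda>y. \<alpha> * F y + \<beta> * G y) differentiable at x"
    by (rule differentiable_at_cong_open[OF U x _ lin]) (rule diter_lincomb[OF U F G])
qed

section \<open>Symmetry of second directional derivatives\<close>

lemma linearization_remainder_diff:
  fixes G :: "'a::real_normed_vector \<Rightarrow> 'b::real_normed_vector"
  assumes "linear G'"
    and approx: "\<And>y. norm (y - x) < d \<Longrightarrow> norm (G y - G x - G' (y - x)) \<le> \<epsilon> * norm (y - x)"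
    and "norm (p - x) < d" "norm (q - x) < d"
  shows "norm (G p - G q - G' (p - q)) \<le> \<epsilon> * (norm (p - x) + norm (q - x))"
proof -
  have "G p - G q - G' (p - q) = (G p - G x - G' (p - x)) - (G q - G x - G' (q - x))"
    using \<open>linear G'\<close> by (simp add: linear_diff algebra_simps)
  also have "norm \<dots> \<le> norm (G p - G x - G' (p - x)) + norm (G q - G x - G' (q - x))"
    by (rule norm_triangle_ineq4)
  also have "\<dots> \<le> \<epsilon> * norm (p - x) + \<epsilon> * norm (q - x)"
    using approx assms(3,4) by (intro add_mono) auto
  finally show ?thesis
    by (simp add: distrib_left)
qed

lemma second_difference_bound:
  fixes F :: "'a::real_normed_vector \<Rightarrow> complex"
  assumes "0 \<le> h"
    and diff: "\<And>t. t \<in> {0..h} \<Longrightarrow>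
      F differentiable at (x + t *\<^sub>R a) \<and> F differentiable at (x + h *\<^sub>R b + t *\<^sub>R a)"
    and bound: "\<And>t. t \<in> {0..h} \<Longrightarrow>
      norm (dir_deriv a F (x + h *\<^sub>R b + t *\<^sub>R a) - dir_deriv a F (x + t *\<^sub>R a) - c) \<le> B"
  shows "norm (F (x + h *\<^sub>R a + h *\<^sub>R b) - F (x + h *\<^sub>R a) - F (x + h *\<^sub>R b) + F x - h *\<^sub>R c)
    \<le> B * h"
proof -
  define \<psi> where "\<psi> t = F (x + h *\<^sub>R b + t *\<^sub>R a) - F (x + t *\<^sub>R a) - t *\<^sub>R c" for t
  define \<psi>' where "\<psi>' t = dir_deriv a F (x + h *\<^sub>R b + t *\<^sub>R a) - dir_deriv a F (x + t *\<^sub>R a) - c"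
    for t
  have deriv: "(\<psi> has_derivative (\<lambda>s. s *\<^sub>R \<psi>' t)) (at t within {0..h})"
    if "t \<in> {0..h}" for t
    unfolding \<psi>_def \<psi>'_def scaleR_diff_right
    using diff[OF that]
    by (intro has_derivative_diff has_derivative_along_line) (auto intro!: derivative_eq_intros)
  have onorm_scale: "onorm (\<lambda>s::real. s *\<^sub>R w) = norm w" for w :: complex
    using onorm_scaleR_left[OF bounded_linear_ident, of w] by (simp add: onorm_id)
  have "onorm (\<lambda>s::real. s *\<^sub>R \<psi>' t) \<le> B" if "t \<in> {0..h}" for t
    unfolding onorm_scale \<psi>'_def by (rule bound[OF that])
  then have "norm (\<psi> h - \<psi> 0) \<le> B * norm (h - 0)"
    using differentiable_bound[OF convex_real_interval(5) deriv, of B h 0] \<open>0 \<le> h\<close> by simp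
  moreover have "\<psi> h - \<psi> 0
      = F (x + h *\<^sub>R a + h *\<^sub>R b) - F (x + h *\<^sub>R a) - F (x + h *\<^sub>R b) + F x - h *\<^sub>R c"
    by (simp add: \<psi>_def add_ac)
  ultimately show ?thesis
    using \<open>0 \<le> h\<close> by simp
qed

lemma norm_segment_offsets:
  assumes "t \<in> {0..h}"
  shows "norm (h *\<^sub>R b + t *\<^sub>R a) \<le> h * (norm a + norm b + 1)" "norm (t *\<^sub>R a) \<le> h * (norm a + norm b + 1)"
proof -
  have "norm (t *\<^sub>R a) \<le> h * norm a"
    using assms by (simp add: mult_right_mono)
  moreover have "norm (h *\<^sub>R b + t *\<^sub>R a) \<le> h * norm b + norm (t *\<^sub>R a)"
    using norm_triangle_ineq[of "h *\<^sub>R b" "t *\<^sub>R a"] assms by simp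
  moreover have "0 \<le> h" "0 \<le> h * norm b"
    using assms by simp_all
  ultimately show "norm (h *\<^sub>R b + t *\<^sub>R a) \<le> h * (norm a + norm b + 1)" "norm (t *\<^sub>R a) \<le> h * (norm a + norm b + 1)"
    unfolding distrib_left mult_1_right by linarith+
qed

lemma second_difference_error:
  fixes F :: "'a::real_normed_vector \<Rightarrow> complex"
  assumes U: "open U" "x \<in> U" and diff: "\<And>y. y \<in> U \<Longrightarrow> F differentiable at y"
    and G': "(dir_deriv a F has_derivative G') (at x)" and "\<epsilon> > 0"
  obtains d where "d > 0" "\<And>h. 0 < h \<Longrightarrow> h < d \<Longrightarrow>
    norm (F (x + h *\<^sub>R a + h *\<^sub>R b) - F (x + h *\<^sub>R a) - F (x + h *\<^sub>R b) + F x - h *\<^sub>R (h *\<^sub>R G' b))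
      \<le> \<epsilon> * h * h"
proof -
  have "linear G'"
    using G' has_derivative_linear by blast
  obtain r where r: "r > 0" "ball x r \<subseteq> U"
    using U open_contains_ball by blast
  define M where "M = norm a + norm b + 1"
  have M: "M > 0"
    unfolding M_def by (simp add: add_nonneg_pos)
  then have "\<epsilon> / (2 * M) > 0"
    using \<open>\<epsilon> > 0\<close> by simp
  then obtain d where "d > 0" and approx: "\<And>y. norm (y - x) < d \<Longrightarrow>
      norm (dir_deriv a F y - dir_deriv a F x - G' (y - x)) \<le> \<epsilon> / (2 * M) * norm (y - x)"
    using G'[unfolded has_derivative_at_alt] by blast
  show thesis
  proof (rule that[of "min d r / M"])
    fix h :: real assume "0 < h" "h < min d r / M"
    then have hM: "h * M < d" "h * M < r"
      using M by (simp_all add: pos_less_divide_eq)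
    show "norm (F (x + h *\<^sub>R a + h *\<^sub>R b) - F (x + h *\<^sub>R a) - F (x + h *\<^sub>R b) + F x - h *\<^sub>R (h *\<^sub>R G' b))
      \<le> \<epsilon> * h * h"
    proof (rule second_difference_bound)
      fix t assume t: "t \<in> {0..h}"
      have near: "norm (x + h *\<^sub>R b + t *\<^sub>R a - x) \<le> h * M" "norm (x + t *\<^sub>R a - x) \<le> h * M"
        using norm_segment_offsets[OF t, where a = a and b = b] unfolding M_def by simp_all
      then have "x + h *\<^sub>R b + t *\<^sub>R a \<in> ball x r" "x + t *\<^sub>R a \<in> ball x r"
        using hM(2) by (simp_all add: dist_norm norm_minus_commute add_ac)
      then show "F differentiable at (x + t *\<^sub>R a) \<and> F differentiable at (x + h *\<^sub>R b + t *\<^sub>R a)"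
        using diff r(2) by blast
      have "norm (dir_deriv a F (x + h *\<^sub>R b + t *\<^sub>R a) - dir_deriv a F (x + t *\<^sub>R a)
            - G' (x + h *\<^sub>R b + t *\<^sub>R a - (x + t *\<^sub>R a)))
          \<le> \<epsilon> / (2 * M) * (norm (x + h *\<^sub>R b + t *\<^sub>R a - x) + norm (x + t *\<^sub>R a - x))"
        using near hM(1) by (intro linearization_remainder_diff[OF \<open>linear G'\<close> approx]) auto
      also have "\<dots> \<le> \<epsilon> / (2 * M) * (2 * (h * M))"
        using near \<open>\<epsilon> > 0\<close> M by (intro mult_left_mono) auto
      finally show "norm (dir_deriv a F (x + h *\<^sub>R b + t *\<^sub>R a) - dir_deriv a F (x + t *\<^sub>R a)
          - h *\<^sub>R G' b) \<le> \<epsilon> * h"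
        using M \<open>linear G'\<close> by (simp add: linear_scale)
    qed (use \<open>0 < h\<close> in simp)
  qed (use \<open>d > 0\<close> \<open>r > 0\<close> M in simp)
qed

lemma tendsto_at_right_of_square_error:
  fixes \<Delta> :: "real \<Rightarrow> complex"
  assumes "\<And>\<epsilon>. \<epsilon> > 0 \<Longrightarrow>
    \<exists>d>0. \<forall>h. 0 < h \<and> h < d \<longrightarrow> norm (\<Delta> h - of_real (h\<^sup>2) * c) \<le> \<epsilon> * h\<^sup>2"
  shows "((\<lambda>h. \<Delta> h / of_real (h\<^sup>2)) \<longlongrightarrow> c) (at_right 0)"
  unfolding tendsto_iff eventually_at_right_field
proof (intro allI impI)
  fix e :: real assume "e > 0"
  then obtain d where "d > 0"
    and d: "\<And>h. 0 < h \<and> h < d \<Longrightarrow> norm (\<Delta> h - of_real (h\<^sup>2) * c) \<le> e / 2 * h\<^sup>2"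
    using assms[of "e / 2"] by auto
  have "dist (\<Delta> h / of_real (h\<^sup>2)) c < e" if "0 < h" "h < d" for h
  proof -
    have "\<Delta> h / of_real (h\<^sup>2) - c = (\<Delta> h - of_real (h\<^sup>2) * c) / of_real (h\<^sup>2)"
      using that by (simp add: diff_divide_distrib)
    then have "dist (\<Delta> h / of_real (h\<^sup>2)) c = norm (\<Delta> h - of_real (h\<^sup>2) * c) / h\<^sup>2"
      by (simp add: dist_norm norm_divide norm_power)
    also have "\<dots> \<le> e / 2"
      using d that by (simp add: divide_le_eq)
    finally show ?thesis
      using \<open>e > 0\<close> by simp
  qed
  then show "\<exists>b>0. \<forall>h>0. h < b \<longrightarrow> dist (\<Delta> h / of_real (h\<^sup>2)) c < e"
    using \<open>d > 0\<close> by blast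
qed

lemma second_difference_tendsto:
  fixes F :: "'a::real_normed_vector \<Rightarrow> complex"
  assumes U: "open U" "x \<in> U" and diff: "\<And>y. y \<in> U \<Longrightarrow> F differentiable at y"
    and diff_a: "dir_deriv a F differentiable at x"
  shows "((\<lambda>h::real. (F (x + h *\<^sub>R a + h *\<^sub>R b) - F (x + h *\<^sub>R a) - F (x + h *\<^sub>R b) + F x)
            / of_real (h\<^sup>2)) \<longlongrightarrow> dir_deriv b (dir_deriv a F) x) (at_right 0)"
proof -
  obtain G' where G': "(dir_deriv a F has_derivative G') (at x)"
    using diff_a by (auto simp: differentiable_def)
  have "\<exists>d>0. \<forall>h. 0 < h \<and> h < d \<longrightarrow>
      norm (F (x + h *\<^sub>R a + h *\<^sub>R b) - F (x + h *\<^sub>R a) - F (x + h *\<^sub>R b) + F x - of_real (h\<^sup>2) * G' b)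
        \<le> \<epsilon> * h\<^sup>2" if \<epsilon>: "\<epsilon> > 0" for \<epsilon>
  proof -
    obtain d where "d > 0" and d: "\<And>h. 0 < h \<Longrightarrow> h < d \<Longrightarrow>
      norm (F (x + h *\<^sub>R a + h *\<^sub>R b) - F (x + h *\<^sub>R a) - F (x + h *\<^sub>R b) + F x - h *\<^sub>R (h *\<^sub>R G' b))
        \<le> \<epsilon> * h * h"
      using second_difference_error[OF U diff G' \<epsilon>, where b = b] by blast
    then show ?thesis
      by (intro exI[of _ d]) (simp add: scaleR_conv_of_real power2_eq_square mult.assoc)
  qed
  then show ?thesis
    using dir_deriv_eq[OF G'] by (intro tendsto_at_right_of_square_error) simp
qed

lemma dir_deriv_commute:
  fixes F :: "'a::real_normed_vector \<Rightarrow> complex"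
  assumes "open U" "x \<in> U" "\<And>y. y \<in> U \<Longrightarrow> F differentiable at y"
    and "dir_deriv a F differentiable at x" "dir_deriv b F differentiable at x"
  shows "dir_deriv b (dir_deriv a F) x = dir_deriv a (dir_deriv b F) x"
proof -
  have "(\<lambda>h::real. (F (x + h *\<^sub>R b + h *\<^sub>R a) - F (x + h *\<^sub>R b) - F (x + h *\<^sub>R a) + F x) / of_real (h^2))
      = (\<lambda>h::real. (F (x + h *\<^sub>R a + h *\<^sub>R b) - F (x + h *\<^sub>R a) - F (x + h *\<^sub>R b) + F x) / of_real (h^2))"
    by (simp add: algebra_simps)
  with second_difference_tendsto[OF assms(1-3,5), of a]
  have "((\<lambda>h::real. (F (x + h *\<^sub>R a + h *\<^sub>R b) - F (x + h *\<^sub>R a) - F (x + h *\<^sub>R b) + F x)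
            / of_real (h^2)) \<longlongrightarrow> dir_deriv a (dir_deriv b F) x) (at_right 0)"
    by simp
  with second_difference_tendsto[OF assms(1-4), of b] show ?thesis
    using tendsto_unique[OF trivial_limit_at_right_real] by blast
qed

definition dcomb ::
    "complex \<Rightarrow> complex \<Rightarrow> 'a::real_normed_vector \<Rightarrow> 'a \<Rightarrow> ('a \<Rightarrow> complex) \<Rightarrow> 'a \<Rightarrow> complex"
  where "dcomb \<alpha> \<beta> a b F = (\<lambda>y. \<alpha> * dir_deriv a F y + \<beta> * dir_deriv b F y)"

lemma smooth_on_dcomb: "open U \<Longrightarrow> smooth_on U F \<Longrightarrow> smooth_on U (dcomb \<alpha> \<beta> a b F)"
  unfolding dcomb_def by (intro smooth_on_lincomb smooth_on_dir_deriv)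

lemma smooth_on_dcomb_power: "open U \<Longrightarrow> smooth_on U F \<Longrightarrow> smooth_on U ((dcomb \<alpha> \<beta> a b ^^ n) F)"
  by (induction n) (auto intro: smooth_on_dcomb)

lemma dcomb_cong_open:
  assumes "open U" "y \<in> U" "\<And>z. z \<in> U \<Longrightarrow> F z = G z"
  shows "dcomb \<alpha> \<beta> a b F y = dcomb \<alpha> \<beta> a b G y"
  unfolding dcomb_def using dir_deriv_cong_open[OF assms] by simp

lemma dcomb_power_cong_open:
  assumes "open U" "\<And>z. z \<in> U \<Longrightarrow> F z = G z"
  shows "y \<in> U \<Longrightarrow> (dcomb \<alpha> \<beta> a b ^^ n) F y = (dcomb \<alpha> \<beta> a b ^^ n) G y"
proof (induction n arbitrary: y)
  case (Suc n)
  then show ?case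
    by simp (rule dcomb_cong_open[OF assms(1) Suc.prems Suc.IH])
qed (use assms in simp)

lemma dcomb_const: "dcomb \<alpha> \<beta> a b (\<lambda>_. c) y = 0"
  by (simp add: dcomb_def dir_deriv_eq[OF has_derivative_const])

lemma dcomb_cmult:
  "F differentiable at y \<Longrightarrow> dcomb \<alpha> \<beta> a b (\<lambda>z. c * F z) y = c * dcomb \<alpha> \<beta> a b F y"
  by (simp add: dcomb_def dir_deriv_cmult algebra_simps)

lemma dcomb_mult:
  assumes "F differentiable at y" "G differentiable at y"
  shows "dcomb \<alpha> \<beta> a b (\<lambda>z. F z * G z) y = dcomb \<alpha> \<beta> a b F y * G y + F y * dcomb \<alpha> \<beta> a b G y"
  using assms by (simp add: dcomb_def dir_deriv_mult algebra_simps)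

lemma dcomb_sum_cmult:
  assumes "\<And>s. s \<in> S \<Longrightarrow> F s differentiable at y"
  shows "dcomb \<alpha> \<beta> a b (\<lambda>z. \<Sum>s\<in>S. c s * F s z) y = (\<Sum>s\<in>S. c s * dcomb \<alpha> \<beta> a b (F s) y)"
proof -
  have "(\<lambda>z. c s * F s z) differentiable at y" if "s \<in> S" for s
    using assms[OF that] by (intro differentiable_mult differentiable_const)
  then show ?thesis
    using assms
    by (simp add: dcomb_def dir_deriv_sum dir_deriv_cmult sum.distrib sum_distrib_left algebra_simps)
qed

lemma dcomb_commute:
  assumes U: "open U" and F: "smooth_on U F" and y: "y \<in> U"
  shows "dcomb \<alpha> \<beta> a b (dcomb \<alpha>' \<beta>' a' b' F) y = dcomb \<alpha>' \<beta>' a' b' (dcomb \<alpha> \<beta> a b F) y"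
proof -
  have diff: "dir_deriv c F differentiable at y" for c
    by (intro smooth_on_differentiable[OF U _ y] smooth_on_dir_deriv F)
  have "dir_deriv c (dir_deriv d F) y = dir_deriv d (dir_deriv c F) y" for c d
    using smooth_on_differentiable[OF U F] by (intro dir_deriv_commute[OF U y _ diff diff])
  then show ?thesis
    unfolding dcomb_def using dir_deriv_lincomb[OF diff diff] by (simp add: algebra_simps)
qed

lemma dcomb_power_commute:
  assumes U: "open U" and F: "smooth_on U F"
  shows "y \<in> U \<Longrightarrow>
    dcomb \<alpha> \<beta> a b ((dcomb \<alpha>' \<beta>' a' b' ^^ n) F) y = (dcomb \<alpha>' \<beta>' a' b' ^^ n) (dcomb \<alpha> \<beta> a b F) y"
proof (induction n arbitrary: y)
  case (Suc n)
  have "dcomb \<alpha> \<beta> a b ((dcomb \<alpha>' \<beta>' a' b' ^^ Suc n) F) y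
      = dcomb \<alpha>' \<beta>' a' b' (dcomb \<alpha> \<beta> a b ((dcomb \<alpha>' \<beta>' a' b' ^^ n) F)) y"
    using dcomb_commute[OF U smooth_on_dcomb_power[OF U F] Suc.prems] by simp
  also have "\<dots> = (dcomb \<alpha>' \<beta>' a' b' ^^ Suc n) (dcomb \<alpha> \<beta> a b F) y"
    by simp (rule dcomb_cong_open[OF U Suc.prems Suc.IH])
  finally show ?case .
qed simp

lemma has_derivative_inverse_power:
  fixes w :: "'a::real_normed_vector \<Rightarrow> complex"
  assumes "(w has_derivative W) (at y)" "w y \<noteq> 0"
  shows "((\<lambda>z. inverse (w z) ^ m) has_derivative
           (\<lambda>h. - of_nat m * inverse (w y) ^ Suc m * W h)) (at y)"
  using has_derivative_power[OF Deriv.has_derivative_inverse[OF assms(2,1)], of m]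
  by (rule has_derivative_eq_rhs) (cases m, auto simp: fun_eq_iff algebra_simps)

lemma dcomb_inverse_power:
  fixes w :: "'a::real_normed_vector \<Rightarrow> complex"
  assumes "w differentiable at y" "w y \<noteq> 0"
  shows "dcomb \<alpha> \<beta> a b (\<lambda>z. inverse (w z) ^ m) y
    = - of_nat m * inverse (w y) ^ Suc m * dcomb \<alpha> \<beta> a b w y"
proof -
  obtain W where W: "(w has_derivative W) (at y)"
    using assms(1) unfolding differentiable_def by blast
  show ?thesis
    unfolding dcomb_def dir_deriv_eq[OF W] dir_deriv_eq[OF has_derivative_inverse_power[OF W assms(2)]]
    by (simp add: algebra_simps)
qed

section \<open>Coefficient identities\<close>

definition Rpow_coeff :: "nat \<Rightarrow> complex \<Rightarrow> nat \<Rightarrow> complex" where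
  "Rpow_coeff j \<kappa> r = of_nat (j choose r) * pochhammer (\<kappa> + of_nat r) (j - r) * (2 * \<i>) ^ r"

lemma Rpow_coeff_Suc:
  assumes "r \<le> Suc j"
  shows "Rpow_coeff (Suc j) \<kappa> r = Rpow_coeff j \<kappa> r * (\<kappa> + of_nat j + of_nat r)
    + (if r = 0 then 0 else 2 * \<i> * Rpow_coeff j \<kappa> (r - 1))"
proof (cases r)
  case 0
  then show ?thesis
    by (simp add: Rpow_coeff_def pochhammer_Suc)
next
  case (Suc q)
  show ?thesis
  proof (cases "q = j")
    case True
    then show ?thesis
      using Suc by (simp add: Rpow_coeff_def)
  next
    case False
    then have "q < j"
      using assms Suc by simp
    then obtain m where j: "j = Suc (q + m)"
      using less_iff_Suc_add by auto
    define P where "P = pochhammer (\<kappa> + of_nat q + 1) m"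
    define T where "T = (2 * \<i> :: complex) ^ q"
    define C0 where "C0 = (of_nat (j choose q) :: complex)"
    define C1 where "C1 = (of_nat (j choose Suc q) :: complex)"
    have binomial: "(of_nat q + 1) * C1 = (of_nat m + 1) * C0"
      unfolding C0_def C1_def j using Suc_times_binomial_add[of q m]
      by (metis of_nat_Suc of_nat_mult add.commute)
    have nat: "(of_nat j :: complex) = of_nat q + of_nat m + 1" "(of_nat r :: complex) = of_nat q + 1"
      using j Suc by simp_all
    have "Rpow_coeff (Suc j) \<kappa> r = (C0 + C1) * (P * (\<kappa> + of_nat j)) * (2 * \<i> * T)"
      unfolding Rpow_coeff_def Suc C0_def C1_def P_def T_def j by (simp add: pochhammer_Suc add_ac)
    also have "\<dots> = C1 * P * (2 * \<i> * T) * (\<kappa> + of_nat j + of_nat r)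
        + 2 * \<i> * (C0 * ((\<kappa> + of_nat q) * P) * T)
        + 2 * \<i> * T * P * ((of_nat m + 1) * C0 - (of_nat q + 1) * C1)"
      unfolding nat by (simp add: algebra_simps)
    also have "C1 * P * (2 * \<i> * T) = Rpow_coeff j \<kappa> r"
      unfolding Rpow_coeff_def Suc C1_def P_def T_def j by (simp add: add_ac)
    also have "C0 * ((\<kappa> + of_nat q) * P) * T = Rpow_coeff j \<kappa> (r - 1)"
      unfolding Rpow_coeff_def Suc C0_def P_def T_def j by (simp add: pochhammer_rec add_ac)
    finally show ?thesis
      using Suc binomial by simp
  qed
qed

lemma Rpow_coeff_sum_Suc:
  fixes X :: "nat \<Rightarrow> complex"
  shows "(\<Sum>r=0..j. Rpow_coeff j \<kappa> r
            * (2 * \<i> * (\<i> / 2 * of_nat (j - r) * v ^ Suc (j - r) * X r + v ^ (j - r) * X (Suc r))))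
         + (\<kappa> + 2 * of_nat j) * v * (\<Sum>r=0..j. Rpow_coeff j \<kappa> r * (v ^ (j - r) * X r))
       = (\<Sum>r=0..Suc j. Rpow_coeff (Suc j) \<kappa> r * (v ^ (Suc j - r) * X r))"
  (is "?lhs = ?rhs")
proof -
  define c where "c = Rpow_coeff j \<kappa>"
  define Y where "Y r = v ^ (Suc j - r) * X r" for r
  have "?lhs = (\<Sum>r=0..j. c r * (\<kappa> + of_nat j + of_nat r) * Y r)
      + (\<Sum>r=0..j. 2 * \<i> * c r * Y (Suc r))"
    unfolding sum.distrib[symmetric] sum_distrib_left c_def[symmetric]
  proof (rule sum.cong[OF refl])
    fix r assume "r \<in> {0..j}"
    then have pw: "v ^ (Suc j - r) = v * v ^ (j - r)"
      and nat: "(of_nat (j - r) :: complex) = of_nat j - of_nat r"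
      by (simp_all add: Suc_diff_le of_nat_diff)
    show "c r * (2 * \<i> * (\<i> / 2 * of_nat (j - r) * v ^ Suc (j - r) * X r + v ^ (j - r) * X (Suc r)))
        + (\<kappa> + 2 * of_nat j) * v * (c r * (v ^ (j - r) * X r))
        = c r * (\<kappa> + of_nat j + of_nat r) * Y r + 2 * \<i> * c r * Y (Suc r)"
      unfolding Y_def pw nat power_Suc by (simp add: field_simps)
  qed
  also have "\<dots> = (\<Sum>r=0..Suc j. c r * (\<kappa> + of_nat j + of_nat r) * Y r)
      + (\<Sum>r=0..Suc j. (if r = 0 then 0 else 2 * \<i> * c (r - 1)) * Y r)"
  proof -
    have "(\<Sum>r=0..Suc j. c r * (\<kappa> + of_nat j + of_nat r) * Y r)
        = (\<Sum>r=0..j. c r * (\<kappa> + of_nat j + of_nat r) * Y r)"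
      by (simp add: c_def Rpow_coeff_def)
    moreover have "(\<Sum>r=0..Suc j. (if r = 0 then 0 else 2 * \<i> * c (r - 1)) * Y r)
        = (\<Sum>r=0..j. 2 * \<i> * c r * Y (Suc r))"
      unfolding sum.atLeast0_atMost_Suc_shift by simp
    ultimately show ?thesis
      by simp
  qed
  also have "\<dots> = ?rhs"
    unfolding sum.distrib[symmetric] Y_def c_def
    by (intro sum.cong refl) (simp add: Rpow_coeff_Suc algebra_simps)
  finally show ?thesis .
qed

lemma gbinomial_pochhammer_exchange:
  fixes a b :: complex
  assumes "s \<le> j"
  shows "((a + of_nat j - 1) gchoose s) * ((b + of_nat j - 1) gchoose (j - s)) * pochhammer a (j - s)
       = ((a + of_nat j - 1) gchoose j) * of_nat (j choose s) * pochhammer (b + of_nat s) (j - s)"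
proof -
  obtain n where j: "j = s + n"
    using assms le_Suc_ex by blast
  have 1: "(a + of_nat j - 1) gchoose s = pochhammer (a + of_nat n) s / fact s"
    unfolding gbinomial_pochhammer' j by (simp add: algebra_simps)
  have 2: "(b + of_nat j - 1) gchoose (j - s) = pochhammer (b + of_nat s) n / fact n"
    unfolding gbinomial_pochhammer' j by (simp add: algebra_simps)
  have 3: "(a + of_nat j - 1) gchoose j = pochhammer a n * pochhammer (a + of_nat n) s / fact j"
    unfolding gbinomial_pochhammer' j by (simp add: algebra_simps pochhammer_product' add.commute)
  have 4: "(of_nat (j choose s) :: complex) = fact j / (fact s * fact n)"
    using binomial_fact[OF assms] j by simp
  show ?thesis
    unfolding 1 2 3 4 using j by (simp add: field_simps)
qed

lemma two_i_power_split:
  assumes "s \<le> j"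
  shows "(2 * \<i>) ^ j * (\<i> / 2) ^ (j - s) = (-1) ^ (j - s) * (2 * \<i> :: complex) ^ s"
proof -
  obtain n where j: "j = s + n"
    using assms le_Suc_ex by blast
  have "(2 * \<i>) * (\<i> / 2) = (-1 :: complex)"
    by simp
  then have minus_one: "(2 * \<i>) ^ n * (\<i> / 2) ^ n = (-1 :: complex) ^ n"
    by (simp only: power_mult_distrib[symmetric])
  have "(2 * \<i>) ^ (s + n) * (\<i> / 2) ^ n = (2 * \<i>) ^ s * ((2 * \<i>) ^ n * (\<i> / 2 :: complex) ^ n)"
    by (simp only: power_add mult.assoc)
  also have "\<dots> = (-1) ^ n * (2 * \<i>) ^ s"
    unfolding minus_one by (rule mult.commute)
  finally show ?thesis
    unfolding j diff_add_inverse .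
qed

lemma cohen_coeff_term:
  fixes a b :: complex
  assumes "s \<le> j"
  shows "(2 * \<i>) ^ j * ((a + of_nat j - 1) gchoose s) * ((b + of_nat j - 1) gchoose (j - s))
           * ((\<i> / 2) ^ (j - s) * pochhammer a (j - s))
       = (-1) ^ (j - s) * ((a + of_nat j - 1) gchoose j) * Rpow_coeff j b s"
proof -
  have "(2 * \<i>) ^ j * ((a + of_nat j - 1) gchoose s) * ((b + of_nat j - 1) gchoose (j - s))
           * ((\<i> / 2) ^ (j - s) * pochhammer a (j - s))
      = ((2 * \<i>) ^ j * (\<i> / 2) ^ (j - s))
        * (((a + of_nat j - 1) gchoose s) * ((b + of_nat j - 1) gchoose (j - s)) * pochhammer a (j - s))"
    by (simp only: mult_ac)
  also have "\<dots> = (-1) ^ (j - s) * ((a + of_nat j - 1) gchoose j) * Rpow_coeff j b s"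
    unfolding two_i_power_split[OF assms] gbinomial_pochhammer_exchange[OF assms] Rpow_coeff_def
    by (simp only: mult_ac)
  finally show ?thesis .
qed

lemma cohen_coeff_sum_first:
  fixes a b v :: complex and X :: "nat \<Rightarrow> complex"
  shows "(2 * \<i>) ^ j * (\<Sum>s=0..j. (-1) ^ s * ((a + of_nat j - 1) gchoose s)
            * ((b + of_nat j - 1) gchoose (j - s))
            * ((\<i> / 2) ^ (j - s) * pochhammer a (j - s) * (v ^ (j - s) * X s)))
       = (-1) ^ j * ((a + of_nat j - 1) gchoose j) * (\<Sum>s=0..j. Rpow_coeff j b s * (v ^ (j - s) * X s))"
  unfolding sum_distrib_left
proof (rule sum.cong[OF refl])
  fix s assume "s \<in> {0..j}"
  then have s: "s \<le> j"
    by simp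
  have sign: "(-1) ^ s * (-1) ^ (j - s) = ((-1) ^ j :: complex)"
    using s by (simp flip: power_add)
  have "(2 * \<i>) ^ j * ((-1) ^ s * ((a + of_nat j - 1) gchoose s) * ((b + of_nat j - 1) gchoose (j - s))
            * ((\<i> / 2) ^ (j - s) * pochhammer a (j - s) * (v ^ (j - s) * X s)))
      = (-1) ^ s * ((2 * \<i>) ^ j * ((a + of_nat j - 1) gchoose s) * ((b + of_nat j - 1) gchoose (j - s))
            * ((\<i> / 2) ^ (j - s) * pochhammer a (j - s))) * (v ^ (j - s) * X s)"
    by (simp only: mult_ac)
  also have "\<dots> = ((-1) ^ s * (-1) ^ (j - s)) * ((a + of_nat j - 1) gchoose j) * (Rpow_coeff j b s * (v ^ (j - s) * X s))"
    unfolding cohen_coeff_term[OF s] by (simp only: mult_ac)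
  finally show "(2 * \<i>) ^ j * ((-1) ^ s * ((a + of_nat j - 1) gchoose s) * ((b + of_nat j - 1) gchoose (j - s))
            * ((\<i> / 2) ^ (j - s) * pochhammer a (j - s) * (v ^ (j - s) * X s)))
      = (-1) ^ j * ((a + of_nat j - 1) gchoose j) * (Rpow_coeff j b s * (v ^ (j - s) * X s))"
    unfolding sign .
qed

lemma cohen_coeff_sum_second:
  fixes a b v :: complex and Y :: "nat \<Rightarrow> complex"
  shows "(2 * \<i>) ^ j * (\<Sum>s=0..j. (-1) ^ s * ((a + of_nat j - 1) gchoose s)
            * ((b + of_nat j - 1) gchoose (j - s))
            * ((\<i> / 2) ^ s * pochhammer b s * (v ^ s * Y (j - s))))
       = ((b + of_nat j - 1) gchoose j) * (\<Sum>r=0..j. Rpow_coeff j a r * (v ^ (j - r) * Y r))"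
proof -
  define f where "f s = (-1) ^ s * ((a + of_nat j - 1) gchoose s) * ((b + of_nat j - 1) gchoose (j - s))
            * ((\<i> / 2) ^ s * pochhammer b s * (v ^ s * Y (j - s)))" for s
  have summand: "(2 * \<i>) ^ j * f (j - r) = ((b + of_nat j - 1) gchoose j) * (Rpow_coeff j a r * (v ^ (j - r) * Y r))"
    if "r \<in> {0..j}" for r
  proof -
    from that have r: "r \<le> j" and jr: "j - (j - r) = r"
      by simp_all
    have sign: "(-1) ^ (j - r) * (-1) ^ (j - r) = (1 :: complex)"
      by (simp flip: power_add)
    have "(2 * \<i>) ^ j * f (j - r)
        = (-1) ^ (j - r) * ((2 * \<i>) ^ j * ((b + of_nat j - 1) gchoose r) * ((a + of_nat j - 1) gchoose (j - r))
            * ((\<i> / 2) ^ (j - r) * pochhammer b (j - r))) * (v ^ (j - r) * Y r)"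
      unfolding f_def jr by (simp only: mult_ac)
    also have "\<dots> = ((-1) ^ (j - r) * (-1) ^ (j - r)) * ((b + of_nat j - 1) gchoose j)
        * (Rpow_coeff j a r * (v ^ (j - r) * Y r))"
      unfolding cohen_coeff_term[OF r] by (simp only: mult_ac)
    finally show ?thesis
      unfolding sign by simp
  qed
  have "(2 * \<i>) ^ j * (\<Sum>s=0..j. f s) = (\<Sum>r=0..j. (2 * \<i>) ^ j * f (j - r))"
    unfolding sum_distrib_left by (rule sum.atLeastAtMost_rev[of _ 0 j, simplified])
  also have "\<dots> = ((b + of_nat j - 1) gchoose j) * (\<Sum>r=0..j. Rpow_coeff j a r * (v ^ (j - r) * Y r))"
    unfolding sum_distrib_left by (rule sum.cong[OF refl summand])
  finally show ?thesis
    by (simp only: f_def)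
qed

lemma minus_four_pi_power_cohen_factor:
  "(- 4 * of_real pi) ^ j * (2 * of_real pi * \<i>) powi (- int j) = (2 * \<i> :: complex) ^ j"
proof -
  define X where "X = 2 * of_real pi * (\<i> :: complex)"
  have "X ^ j \<noteq> 0"
    by (simp add: X_def)
  have "- 4 * of_real pi = (2 * \<i>) * X"
    by (simp add: X_def algebra_simps)
  then have "(- 4 * of_real pi) ^ j * X powi (- int j) = (2 * \<i>) ^ j * (X ^ j * inverse (X ^ j))"
    by (simp only: power_mult_distrib power_int_minus power_int_of_nat mult.assoc)
  with \<open>X ^ j \<noteq> 0\<close> show ?thesis
    by (simp add: X_def)
qed

section \<open>Wirtinger derivatives in one variable of several\<close>

abbreviation dz :: "'a::real_normed_vector \<Rightarrow> 'a \<Rightarrow> ('a \<Rightarrow> complex) \<Rightarrow> 'a \<Rightarrow> complex" where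
  "dz e f \<equiv> dcomb (1 / 2) (- (\<i> / 2)) e f"

abbreviation dzbar :: "'a::real_normed_vector \<Rightarrow> 'a \<Rightarrow> ('a \<Rightarrow> complex) \<Rightarrow> 'a \<Rightarrow> complex" where
  "dzbar e f \<equiv> dcomb (1 / 2) (\<i> / 2) e f"

definition Rline :: "'a::real_normed_vector \<Rightarrow> 'a \<Rightarrow> ('a \<Rightarrow> complex) \<Rightarrow> int
    \<Rightarrow> ('a \<Rightarrow> complex) \<Rightarrow> 'a \<Rightarrow> complex" where
  "Rline e f w m M y = \<i> * (line_deriv e M y - \<i> * line_deriv f M y) + of_int m / w y * M y"

fun Rline_pow :: "'a::real_normed_vector \<Rightarrow> 'a \<Rightarrow> ('a \<Rightarrow> complex) \<Rightarrow> nat \<Rightarrow> int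
    \<Rightarrow> ('a \<Rightarrow> complex) \<Rightarrow> 'a \<Rightarrow> complex" where
  "Rline_pow e f w 0 k M = M"
| "Rline_pow e f w (Suc j) k M = Rline e f w (k + 2 * int j) (Rline_pow e f w j k M)"

text \<open>\<open>w\<close> is the imaginary part of a complex variable with real direction \<open>e\<close> and imaginary
  direction \<open>f\<close>; \<open>e'\<close>, \<open>f'\<close> are the directions of the other variable, along which \<open>w\<close> is constant.\<close>

locale im_coord =
  fixes U :: "'a::real_normed_vector set" and e f e' f' :: 'a and w :: "'a \<Rightarrow> complex"
  assumes open_U: "open U"
    and differentiable_w: "\<And>y. y \<in> U \<Longrightarrow> w differentiable at y"
    and w_nonzero: "\<And>y. y \<in> U \<Longrightarrow> w y \<noteq> 0"
    and dir_deriv_w: "\<And>y. y \<in> U \<Longrightarrow> dir_deriv e w y = 0" "\<And>y. y \<in> U \<Longrightarrow> dir_deriv f w y = 1"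
      "\<And>y. y \<in> U \<Longrightarrow> dir_deriv e' w y = 0" "\<And>y. y \<in> U \<Longrightarrow> dir_deriv f' w y = 0"
begin

text \<open>As \<open>\<Delta>\<^sub>\<kappa> = -4 w\<^sup>2 dz dzbar + 2 i \<kappa> w dzbar\<close>, this is the equation \<open>\<Delta>\<^sub>\<kappa> h = 0\<close>.\<close>

definition Delta_annihilated :: "complex \<Rightarrow> ('a \<Rightarrow> complex) \<Rightarrow> bool" where
  "Delta_annihilated \<kappa> h \<longleftrightarrow>
     (\<forall>y\<in>U. dz e f (dzbar e f h) y = \<i> * \<kappa> / 2 * inverse (w y) * dzbar e f h y)"

lemma dcomb_w_other: "y \<in> U \<Longrightarrow> dcomb \<alpha> \<beta> e' f' w y = 0"
  using dir_deriv_w by (simp add: dcomb_def)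

lemma differentiable_inverse_power_w: "y \<in> U \<Longrightarrow> (\<lambda>z. inverse (w z) ^ n) differentiable at y"
  using differentiable_w w_nonzero by simp

lemma dcomb_inverse_power_mult:
  assumes "F differentiable at y" "y \<in> U"
  shows "dcomb \<alpha> \<beta> e f (\<lambda>z. inverse (w z) ^ n * F z) y
      = - of_nat n * \<beta> * inverse (w y) ^ Suc n * F y + inverse (w y) ^ n * dcomb \<alpha> \<beta> e f F y"
    and "dcomb \<alpha> \<beta> e' f' (\<lambda>z. inverse (w z) ^ n * F z) y = inverse (w y) ^ n * dcomb \<alpha> \<beta> e' f' F y"
  using dcomb_mult[OF differentiable_inverse_power_w[OF assms(2)] assms(1)]
    dcomb_inverse_power[OF differentiable_w[OF assms(2)] w_nonzero[OF assms(2)]]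
    dcomb_w_other[OF assms(2)] dir_deriv_w(2)[OF assms(2)] dir_deriv_w(1)[OF assms(2)]
  by (simp_all add: dcomb_def)

lemma dcomb_power_inverse_power_mult:
  assumes "smooth_on U F"
  shows "y \<in> U \<Longrightarrow> (dcomb \<alpha> \<beta> e' f' ^^ s) (\<lambda>z. c * (inverse (w z) ^ n * F z)) y
    = c * (inverse (w y) ^ n * (dcomb \<alpha> \<beta> e' f' ^^ s) F y)"
proof (induction s arbitrary: y)
  case (Suc s)
  let ?P = "dcomb \<alpha> \<beta> e' f'"
  have diff: "(?P ^^ s) F differentiable at y"
    by (rule smooth_on_differentiable[OF open_U smooth_on_dcomb_power[OF open_U assms] Suc.prems])
  have "(?P ^^ Suc s) (\<lambda>z. c * (inverse (w z) ^ n * F z)) y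
      = ?P (\<lambda>z. c * (inverse (w z) ^ n * (?P ^^ s) F z)) y"
    by simp (rule dcomb_cong_open[OF open_U Suc.prems Suc.IH])
  also have "\<dots> = c * (inverse (w y) ^ n * (?P ^^ Suc s) F y)"
    using dcomb_cmult[OF differentiable_mult[OF differentiable_inverse_power_w[OF Suc.prems] diff]]
      dcomb_inverse_power_mult(2)[OF diff Suc.prems] by simp
  finally show ?case .
qed simp

lemma Delta_annihilatedI:
  assumes g: "smooth_on U g"
    and Delta: "\<And>y. y \<in> U \<Longrightarrow>
      - (w y)\<^sup>2 * (line_deriv e (line_deriv e g) y + line_deriv f (line_deriv f g) y)
      + \<i> * \<kappa> * w y * (line_deriv e g y + \<i> * line_deriv f g y) = 0"
  shows "Delta_annihilated \<kappa> g"
  unfolding Delta_annihilated_def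
proof
  fix y assume y: "y \<in> U"
  have diff: "g differentiable at z" if "z \<in> U" for z
    by (rule smooth_on_differentiable[OF open_U g that])
  have diff': "dir_deriv a g differentiable at z" if "z \<in> U" for a z
    by (rule smooth_on_differentiable[OF open_U smooth_on_dir_deriv[OF g] that])
  have first: "line_deriv a g z = dir_deriv a g z" if "z \<in> U" for a z
    by (rule line_deriv_eq_dir_deriv[OF open_U that _ diff[OF that]]) simp
  have second: "line_deriv a (line_deriv a g) y = dir_deriv a (dir_deriv a g) y" for a
    by (rule line_deriv_eq_dir_deriv[OF open_U y first diff'[OF y]])
  have sym: "dir_deriv e (dir_deriv f g) y = dir_deriv f (dir_deriv e g) y"
    by (rule dir_deriv_commute[OF open_U y diff diff'[OF y] diff'[OF y]])
  define A where "A = dir_deriv e (dir_deriv e g) y + dir_deriv f (dir_deriv f g) y"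
  define B where "B = dir_deriv e g y + \<i> * dir_deriv f g y"
  have inner: "dir_deriv a (dzbar e f g) y
      = 1 / 2 * dir_deriv a (dir_deriv e g) y + \<i> / 2 * dir_deriv a (dir_deriv f g) y" for a
    unfolding dcomb_def by (rule dir_deriv_lincomb[OF diff'[OF y] diff'[OF y]])
  have "dz e f (dzbar e f g) y = 1 / 2 * dir_deriv e (dzbar e f g) y - \<i> / 2 * dir_deriv f (dzbar e f g) y"
    by (simp add: dcomb_def)
  also have "\<dots> = A / 4"
    unfolding inner A_def using sym by (simp add: algebra_simps)
  finally have "dz e f (dzbar e f g) y = A / 4" .
  moreover have "dzbar e f g y = B / 2"
    by (simp add: dcomb_def B_def algebra_simps)
  moreover have "w y * (w y * A - \<i> * \<kappa> * B) = 0"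
    using Delta[OF y] first[OF y] second unfolding A_def B_def
    by (simp add: algebra_simps power2_eq_square)
  then have "A = \<i> * \<kappa> * B / w y"
    using w_nonzero[OF y] by (simp add: field_simps)
  ultimately show "dz e f (dzbar e f g) y = \<i> * \<kappa> / 2 * inverse (w y) * dzbar e f g y"
    by (simp only:) (simp add: field_simps)
qed

lemma dzbar_dz_power:
  assumes h: "smooth_on U h" and annihilated: "Delta_annihilated \<kappa> h"
  shows "y \<in> U \<Longrightarrow> dzbar e f ((dz e f ^^ m) h) y
    = (\<i> / 2) ^ m * pochhammer \<kappa> m * (inverse (w y) ^ m * dzbar e f h y)"
proof (induction m arbitrary: y)
  case (Suc m)
  define C where "C = (\<i> / 2) ^ m * pochhammer \<kappa> m"
  have diff: "dzbar e f h differentiable at y"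
    by (rule smooth_on_differentiable[OF open_U smooth_on_dcomb[OF open_U h] Suc.prems])
  have "dzbar e f ((dz e f ^^ Suc m) h) y = dz e f (dzbar e f ((dz e f ^^ m) h)) y"
    using dcomb_commute[OF open_U smooth_on_dcomb_power[OF open_U h] Suc.prems] by simp
  also have "\<dots> = dz e f (\<lambda>z. C * (inverse (w z) ^ m * dzbar e f h z)) y"
    by (rule dcomb_cong_open[OF open_U Suc.prems]) (simp add: Suc.IH C_def)
  also have "\<dots> = C * dz e f (\<lambda>z. inverse (w z) ^ m * dzbar e f h z) y"
    by (rule dcomb_cmult) (intro differentiable_mult differentiable_inverse_power_w Suc.prems diff)
  also have "\<dots> = C * (of_nat m * (\<i> / 2) * inverse (w y) ^ Suc m * dzbar e f h y
      + inverse (w y) ^ m * (\<i> * \<kappa> / 2 * inverse (w y) * dzbar e f h y))"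
    using dcomb_inverse_power_mult(1)[OF diff Suc.prems] annihilated Suc.prems
    by (simp add: Delta_annihilated_def)
  also have "\<dots> = (\<i> / 2) ^ Suc m * pochhammer \<kappa> (Suc m) * (inverse (w y) ^ Suc m * dzbar e f h y)"
    unfolding C_def by (simp add: pochhammer_Suc algebra_simps)
  finally show ?case .
qed simp

lemma Delta_annihilated_dcomb:
  assumes h: "smooth_on U h" and annihilated: "Delta_annihilated \<kappa> h"
  shows "Delta_annihilated \<kappa> (dcomb \<alpha> \<beta> e' f' h)"
  unfolding Delta_annihilated_def
proof
  fix y assume y: "y \<in> U"
  let ?P = "dcomb \<alpha> \<beta> e' f'"
  have smooth: "smooth_on U (dzbar e f h)"
    by (rule smooth_on_dcomb[OF open_U h])
  have diff: "dzbar e f h differentiable at y"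
    by (rule smooth_on_differentiable[OF open_U smooth y])
  have commute: "dzbar e f (?P h) z = ?P (dzbar e f h) z" if "z \<in> U" for z
    by (rule dcomb_commute[OF open_U h that])
  have "dz e f (dzbar e f (?P h)) y = dz e f (?P (dzbar e f h)) y"
    by (rule dcomb_cong_open[OF open_U y commute])
  also have "\<dots> = ?P (dz e f (dzbar e f h)) y"
    by (rule dcomb_commute[OF open_U smooth y])
  also have "\<dots> = ?P (\<lambda>z. \<i> * \<kappa> / 2 * (inverse (w z) ^ 1 * dzbar e f h z)) y"
    by (rule dcomb_cong_open[OF open_U y]) (use annihilated in \<open>simp add: Delta_annihilated_def\<close>)
  also have "\<dots> = \<i> * \<kappa> / 2 * ?P (\<lambda>z. inverse (w z) ^ 1 * dzbar e f h z) y"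
    by (rule dcomb_cmult) (intro differentiable_mult differentiable_inverse_power_w y diff)
  also have "\<dots> = \<i> * \<kappa> / 2 * inverse (w y) * dzbar e f (?P h) y"
    unfolding dcomb_inverse_power_mult(2)[OF diff y] commute[OF y] by simp
  finally show "dz e f (dzbar e f (?P h)) y = \<i> * \<kappa> / 2 * inverse (w y) * dzbar e f (?P h) y" .
qed

lemma Delta_annihilated_dcomb_power:
  assumes h: "smooth_on U h" and "Delta_annihilated \<kappa> h"
  shows "Delta_annihilated \<kappa> ((dcomb \<alpha> \<beta> e' f' ^^ s) h)"
proof (induction s)
  case (Suc s)
  then show ?case
    using Delta_annihilated_dcomb[OF smooth_on_dcomb_power[OF open_U h]] by simp
qed (simp add: assms)

lemma dzbar_dz_power_dcomb_power:
  assumes g: "smooth_on U g" and annihilated: "Delta_annihilated \<kappa> g" and y: "y \<in> U"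
  shows "dzbar e f ((dz e f ^^ m) ((dcomb \<alpha> \<beta> e' f' ^^ s) g)) y
    = (\<i> / 2) ^ m * pochhammer \<kappa> m * (inverse (w y) ^ m * (dcomb \<alpha> \<beta> e' f' ^^ s) (dzbar e f g) y)"
  using dzbar_dz_power[OF smooth_on_dcomb_power[OF open_U g] Delta_annihilated_dcomb_power[OF g annihilated] y]
    dcomb_power_commute[OF open_U g y] by simp

lemma dzbar_dcomb_power_dz_power:
  assumes g: "smooth_on U g" and annihilated: "Delta_annihilated \<kappa> g" and y: "y \<in> U"
  shows "dzbar e f ((dcomb \<alpha> \<beta> e' f' ^^ s) ((dz e f ^^ m) g)) y
    = (\<i> / 2) ^ m * pochhammer \<kappa> m * (inverse (w y) ^ m * (dcomb \<alpha> \<beta> e' f' ^^ s) (dzbar e f g) y)"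
proof -
  have "dzbar e f ((dcomb \<alpha> \<beta> e' f' ^^ s) ((dz e f ^^ m) g)) y
      = (dcomb \<alpha> \<beta> e' f' ^^ s) (dzbar e f ((dz e f ^^ m) g)) y"
    by (rule dcomb_power_commute[OF open_U smooth_on_dcomb_power[OF open_U g] y])
  also have "\<dots> = (dcomb \<alpha> \<beta> e' f' ^^ s)
      (\<lambda>z. (\<i> / 2) ^ m * pochhammer \<kappa> m * (inverse (w z) ^ m * dzbar e f g z)) y"
    by (rule dcomb_power_cong_open[OF open_U dzbar_dz_power[OF g annihilated] y])
  also have "\<dots> = (\<i> / 2) ^ m * pochhammer \<kappa> m * (inverse (w y) ^ m * (dcomb \<alpha> \<beta> e' f' ^^ s) (dzbar e f g) y)"
    by (rule dcomb_power_inverse_power_mult[OF smooth_on_dcomb[OF open_U g] y])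
  finally show ?thesis .
qed

lemma Rline_eq_dz:
  assumes "y \<in> U" "\<And>z. z \<in> U \<Longrightarrow> M z = E z" "E differentiable at y"
  shows "Rline e f w m M y = 2 * \<i> * dz e f E y + of_int m * inverse (w y) * E y"
  using line_deriv_eq_dir_deriv[OF open_U assms] assms(2)[OF assms(1)]
  by (simp add: Rline_def dcomb_def field_simps)

lemma dz_mult_inverse_power_sum:
  assumes F: "smooth_on U F" and \<beta>: "\<beta> differentiable at y" "dz e f \<beta> y = 0" and y: "y \<in> U"
  shows "dz e f (\<lambda>z. \<beta> z * (\<Sum>r=0..j. c r * (inverse (w z) ^ (j - r) * (dz e f ^^ r) F z))) y
    = \<beta> y * (\<Sum>r=0..j. c r * (\<i> / 2 * of_nat (j - r) * inverse (w y) ^ Suc (j - r) * (dz e f ^^ r) F y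
        + inverse (w y) ^ (j - r) * (dz e f ^^ Suc r) F y))"
proof -
  define T where "T r z = inverse (w z) ^ (j - r) * (dz e f ^^ r) F z" for r z
  have diff_F: "(dz e f ^^ r) F differentiable at y" for r
    by (rule smooth_on_differentiable[OF open_U smooth_on_dcomb_power[OF open_U F] y])
  have diff_T: "T r differentiable at y" for r
    unfolding T_def by (intro differentiable_mult differentiable_inverse_power_w y diff_F)
  have diff_S: "(\<lambda>z. \<Sum>r=0..j. c r * T r z) differentiable at y"
    by (intro differentiable_sum) (auto intro!: differentiable_mult diff_T)
  have "dz e f (\<lambda>z. \<beta> z * (\<Sum>r=0..j. c r * T r z)) y = \<beta> y * dz e f (\<lambda>z. \<Sum>r=0..j. c r * T r z) y"
    using dcomb_mult[OF \<beta>(1) diff_S] \<beta>(2) by simp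
  also have "dz e f (\<lambda>z. \<Sum>r=0..j. c r * T r z) y = (\<Sum>r=0..j. c r * dz e f (T r) y)"
    by (rule dcomb_sum_cmult[OF diff_T])
  also have "\<dots> = (\<Sum>r=0..j. c r * (\<i> / 2 * of_nat (j - r) * inverse (w y) ^ Suc (j - r) * (dz e f ^^ r) F y
        + inverse (w y) ^ (j - r) * (dz e f ^^ Suc r) F y))"
    unfolding T_def dcomb_inverse_power_mult(1)[OF diff_F y]
    by (intro sum.cong refl) (simp add: field_simps w_nonzero[OF y])
  finally show ?thesis
    unfolding T_def .
qed

lemma Rline_pow_expansion:
  assumes F: "smooth_on U F"
    and \<beta>: "\<And>y. y \<in> U \<Longrightarrow> \<beta> differentiable at y" "\<And>y. y \<in> U \<Longrightarrow> dz e f \<beta> y = 0"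
    and M: "\<And>y. y \<in> U \<Longrightarrow> M y = \<beta> y * F y"
  shows "y \<in> U \<Longrightarrow> Rline_pow e f w j k M y
    = \<beta> y * (\<Sum>r=0..j. Rpow_coeff j (of_int k) r * (inverse (w y) ^ (j - r) * (dz e f ^^ r) F y))"
proof (induction j arbitrary: y)
  case (Suc j)
  let ?c = "Rpow_coeff j (of_int k)"
  define S where "S z = (\<Sum>r=0..j. ?c r * (inverse (w z) ^ (j - r) * (dz e f ^^ r) F z))" for z
  define v where "v = inverse (w y)"
  define X where "X r = (dz e f ^^ r) F y" for r
  have "(\<lambda>z. \<beta> z * S z) differentiable at y"
    unfolding S_def using Suc.prems
    by (auto intro!: differentiable_sum differentiable_mult \<beta>(1) differentiable_inverse_power_w
        smooth_on_differentiable[OF open_U smooth_on_dcomb_power[OF open_U F]])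
  with Suc.IH have "Rline_pow e f w (Suc j) k M y
      = 2 * \<i> * dz e f (\<lambda>z. \<beta> z * S z) y + (of_int k + 2 * of_nat j) * v * (\<beta> y * S y)"
    using Rline_eq_dz[OF Suc.prems, of "Rline_pow e f w j k M"] by (simp add: S_def v_def)
  also have "\<dots> = \<beta> y * ((\<Sum>r=0..j. ?c r * (2 * \<i> * (\<i> / 2 * of_nat (j - r) * v ^ Suc (j - r) * X r
            + v ^ (j - r) * X (Suc r))))
          + (of_int k + 2 * of_nat j) * v * (\<Sum>r=0..j. ?c r * (v ^ (j - r) * X r)))"
    unfolding S_def dz_mult_inverse_power_sum[OF F \<beta>(1,2)[OF Suc.prems] Suc.prems]
    by (simp add: v_def X_def sum_distrib_left algebra_simps)
  also have "\<dots> = \<beta> y * (\<Sum>r=0..Suc j. Rpow_coeff (Suc j) (of_int k) r * (v ^ (Suc j - r) * X r))"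
    by (simp only: Rpow_coeff_sum_Suc)
  finally show ?case
    by (simp add: v_def X_def)
qed (use M in \<open>simp add: Rpow_coeff_def\<close>)

end

section \<open>The two variables of the product of two upper half planes\<close>

abbreviation "e1 \<equiv> (1 :: complex, 0 :: complex)"
abbreviation "f1 \<equiv> (\<i> :: complex, 0 :: complex)"
abbreviation "e2 \<equiv> (0 :: complex, 1 :: complex)"
abbreviation "f2 \<equiv> (0 :: complex, \<i> :: complex)"

definition im1 :: "complex \<times> complex \<Rightarrow> complex" where
  "im1 y = of_real (Im (fst y))"

definition im2 :: "complex \<times> complex \<Rightarrow> complex" where
  "im2 y = of_real (Im (snd y))"

lemma open_uhp: "open uhp"
  unfolding uhp_def by (rule open_halfspace_Im_gt)

lemma open_uhp_times_uhp: "open (uhp \<times> uhp)"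
  by (intro open_Times open_uhp)

lemma has_derivative_im1: "(im1 has_derivative (\<lambda>h. of_real (Im (fst h)))) (at y)"
  unfolding im1_def by (intro derivative_eq_intros) auto

lemma has_derivative_im2: "(im2 has_derivative (\<lambda>h. of_real (Im (snd h)))) (at y)"
  unfolding im2_def by (intro derivative_eq_intros) auto

lemma dir_deriv_im1: "dir_deriv v im1 y = of_real (Im (fst v))"
  by (rule dir_deriv_eq[OF has_derivative_im1])

lemma dir_deriv_im2: "dir_deriv v im2 y = of_real (Im (snd v))"
  by (rule dir_deriv_eq[OF has_derivative_im2])

interpretation tau1: im_coord "uhp \<times> uhp" e1 f1 e2 f2 im1
proof unfold_locales
  fix y :: "complex \<times> complex"
  show "im1 differentiable at y"
    using has_derivative_im1 by (rule differentiableI)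
  show "dir_deriv e1 im1 y = 0" "dir_deriv f1 im1 y = 1" "dir_deriv e2 im1 y = 0" "dir_deriv f2 im1 y = 0"
    by (simp_all add: dir_deriv_im1)
  assume "y \<in> uhp \<times> uhp"
  then show "im1 y \<noteq> 0"
    by (auto simp: im1_def uhp_def)
qed (rule open_uhp_times_uhp)

interpretation tau2: im_coord "uhp \<times> uhp" e2 f2 e1 f1 im2
proof unfold_locales
  fix y :: "complex \<times> complex"
  show "im2 differentiable at y"
    using has_derivative_im2 by (rule differentiableI)
  show "dir_deriv e2 im2 y = 0" "dir_deriv f2 im2 y = 1" "dir_deriv e1 im2 y = 0" "dir_deriv f1 im2 y = 0"
    by (simp_all add: dir_deriv_im2)
  assume "y \<in> uhp \<times> uhp"
  then show "im2 y \<noteq> 0"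
    by (auto simp: im2_def uhp_def)
qed (rule open_uhp_times_uhp)

lemma du_dv_line_deriv: "du \<phi> z = line_deriv 1 \<phi> z" "dv \<phi> z = line_deriv \<i> \<phi> z"
  by (simp_all add: du_def dv_def line_deriv_def scaleR_conv_of_real mult.commute)

lemma du_dv_in1:
  "du (\<lambda>z. M (z, z2)) = (\<lambda>z. line_deriv e1 M (z, z2))"
  "dv (\<lambda>z. M (z, z2)) = (\<lambda>z. line_deriv f1 M (z, z2))"
  by (simp_all add: fun_eq_iff du_def dv_def line_deriv_def scaleR_conv_of_real mult.commute)

lemma du_dv_in2:
  "du (\<lambda>z. M (z1, z)) = (\<lambda>z. line_deriv e2 M (z1, z))"
  "dv (\<lambda>z. M (z1, z)) = (\<lambda>z. line_deriv f2 M (z1, z))"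
  by (simp_all add: fun_eq_iff du_def dv_def line_deriv_def scaleR_conv_of_real mult.commute)

lemma in1_Rop: "in1 (Rop m) M = Rline e1 f1 im1 m M"
  by (auto simp: fun_eq_iff in1_def Rop_def dtau_def Rline_def im1_def du_dv_in1)

lemma in2_Rop: "in2 (Rop m) M = Rline e2 f2 im2 m M"
  by (auto simp: fun_eq_iff in2_def Rop_def dtau_def Rline_def im2_def du_dv_in2)

lemma in1_Rpow: "in1 (Rpow j k) M = Rline_pow e1 f1 im1 j k M"
proof (induction j)
  case (Suc j)
  have "in1 (Rpow (Suc j) k) M = in1 (Rop (k + 2 * int j)) (in1 (Rpow j k) M)"
    by (auto simp: fun_eq_iff in1_def)
  also have "\<dots> = Rline_pow e1 f1 im1 (Suc j) k M"
    by (simp only: in1_Rop Suc.IH Rline_pow.simps)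
  finally show ?case .
qed (simp add: fun_eq_iff in1_def)

lemma in2_Rpow: "in2 (Rpow j k) M = Rline_pow e2 f2 im2 j k M"
proof (induction j)
  case (Suc j)
  have "in2 (Rpow (Suc j) k) M = in2 (Rop (k + 2 * int j)) (in2 (Rpow j k) M)"
    by (auto simp: fun_eq_iff in2_def)
  also have "\<dots> = Rline_pow e2 f2 im2 (Suc j) k M"
    by (simp only: in2_Rop Suc.IH Rline_pow.simps)
  finally show ?case .
qed (simp add: fun_eq_iff in2_def)

lemma in1_Lop:
  assumes "y \<in> uhp \<times> uhp" "\<And>z. z \<in> uhp \<times> uhp \<Longrightarrow> M z = E z" "E differentiable at y"
  shows "in1 Lop M y = - 2 * \<i> * (im1 y)\<^sup>2 * dzbar e1 f1 E y"
  using line_deriv_eq_dir_deriv[OF open_uhp_times_uhp assms]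
  by (cases y) (simp add: in1_def Lop_def dtaubar_def im1_def du_dv_in1 dcomb_def field_simps)

lemma in2_Lop:
  assumes "y \<in> uhp \<times> uhp" "\<And>z. z \<in> uhp \<times> uhp \<Longrightarrow> M z = E z" "E differentiable at y"
  shows "in2 Lop M y = - 2 * \<i> * (im2 y)\<^sup>2 * dzbar e2 f2 E y"
  using line_deriv_eq_dir_deriv[OF open_uhp_times_uhp assms]
  by (cases y) (simp add: in2_def Lop_def dtaubar_def im2_def du_dv_in2 dcomb_def field_simps)

lemma in1_Delta_annihilated:
  assumes "smooth_on (uhp \<times> uhp) g" "\<forall>z1\<in>uhp. \<forall>z2\<in>uhp. in1 (Delta k) g (z1, z2) = 0"
  shows "tau1.Delta_annihilated (of_int k) g"
proof (rule tau1.Delta_annihilatedI[OF assms(1)])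
  fix y assume "y \<in> uhp \<times> uhp"
  with assms(2) have "in1 (Delta k) g y = 0"
    by auto
  then show "- (im1 y)\<^sup>2 * (line_deriv e1 (line_deriv e1 g) y + line_deriv f1 (line_deriv f1 g) y)
      + \<i> * of_int k * im1 y * (line_deriv e1 g y + \<i> * line_deriv f1 g y) = 0"
    by (cases y) (simp add: in1_def Delta_def im1_def du_dv_in1)
qed

lemma in2_Delta_annihilated:
  assumes "smooth_on (uhp \<times> uhp) g" "\<forall>z1\<in>uhp. \<forall>z2\<in>uhp. in2 (Delta k) g (z1, z2) = 0"
  shows "tau2.Delta_annihilated (of_int k) g"
proof (rule tau2.Delta_annihilatedI[OF assms(1)])
  fix y assume "y \<in> uhp \<times> uhp"
  with assms(2) have "in2 (Delta k) g y = 0"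
    by auto
  then show "- (im2 y)\<^sup>2 * (line_deriv e2 (line_deriv e2 g) y + line_deriv f2 (line_deriv f2 g) y)
      + \<i> * of_int k * im2 y * (line_deriv e2 g y + \<i> * line_deriv f2 g y) = 0"
    by (cases y) (simp add: in2_def Delta_def im2_def du_dv_in2)
qed

lemma in1_dtau_power:
  assumes E: "smooth_on (uhp \<times> uhp) E" and M: "\<And>y. y \<in> uhp \<times> uhp \<Longrightarrow> M y = E y"
  shows "y \<in> uhp \<times> uhp \<Longrightarrow> (in1 dtau ^^ n) M y = (dz e1 f1 ^^ n) E y"
proof (induction n arbitrary: y)
  case (Suc n)
  have "(in1 dtau ^^ Suc n) M y
      = (line_deriv e1 ((in1 dtau ^^ n) M) y - \<i> * line_deriv f1 ((in1 dtau ^^ n) M) y) / 2"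
    by (cases y) (simp add: in1_def dtau_def du_dv_in1)
  also have "\<dots> = (dz e1 f1 ^^ Suc n) E y"
    using line_deriv_eq_dir_deriv[OF open_uhp_times_uhp Suc.prems Suc.IH
        smooth_on_differentiable[OF open_uhp_times_uhp smooth_on_dcomb_power[OF open_uhp_times_uhp E] Suc.prems]]
    by (simp add: dcomb_def field_simps)
  finally show ?case .
qed (use M in simp)

lemma in2_dtau_power:
  assumes E: "smooth_on (uhp \<times> uhp) E" and M: "\<And>y. y \<in> uhp \<times> uhp \<Longrightarrow> M y = E y"
  shows "y \<in> uhp \<times> uhp \<Longrightarrow> (in2 dtau ^^ n) M y = (dz e2 f2 ^^ n) E y"
proof (induction n arbitrary: y)
  case (Suc n)
  have "(in2 dtau ^^ Suc n) M y
      = (line_deriv e2 ((in2 dtau ^^ n) M) y - \<i> * line_deriv f2 ((in2 dtau ^^ n) M) y) / 2"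
    by (cases y) (simp add: in2_def dtau_def du_dv_in2)
  also have "\<dots> = (dz e2 f2 ^^ Suc n) E y"
    using line_deriv_eq_dir_deriv[OF open_uhp_times_uhp Suc.prems Suc.IH
        smooth_on_differentiable[OF open_uhp_times_uhp smooth_on_dcomb_power[OF open_uhp_times_uhp E] Suc.prems]]
    by (simp add: dcomb_def field_simps)
  finally show ?case .
qed (use M in simp)

lemma has_derivative_diagonal:
  fixes \<Phi> :: "complex \<times> complex \<Rightarrow> complex"
  assumes "(\<Phi> has_derivative \<Phi>') (at (z, z))"
  shows "((\<lambda>z. \<Phi> (z, z)) has_derivative (\<lambda>h. \<Phi>' (h, h))) (at z)"
proof -
  have "((\<lambda>z::complex. (z, z)) has_derivative (\<lambda>h. (h, h))) (at z)"
    by (intro derivative_eq_intros) auto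
  from has_derivative_compose[OF this assms] show ?thesis
    by simp
qed

lemma Lop_diagonal:
  fixes \<Phi> :: "complex \<times> complex \<Rightarrow> complex"
  assumes diff: "\<Phi> differentiable at (z, z)" and z: "z \<in> uhp"
    and \<phi>: "\<And>z'. z' \<in> uhp \<Longrightarrow> \<phi> z' = \<Phi> (z', z')"
  shows "Lop \<phi> z = - 2 * \<i> * of_real ((Im z)\<^sup>2) * (dzbar e1 f1 \<Phi> (z, z) + dzbar e2 f2 \<Phi> (z, z))"
proof -
  obtain \<Phi>' where \<Phi>': "(\<Phi> has_derivative \<Phi>') (at (z, z))"
    using diff unfolding differentiable_def by blast
  have "line_deriv a \<phi> z = dir_deriv (a, 0) \<Phi> (z, z) + dir_deriv (0, a) \<Phi> (z, z)" for a
  proof -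
    have "line_deriv a \<phi> z = dir_deriv a (\<lambda>z. \<Phi> (z, z)) z"
      by (rule line_deriv_eq_dir_deriv[OF open_uhp z \<phi> differentiableI[OF has_derivative_diagonal[OF \<Phi>']]])
    also have "\<dots> = \<Phi>' ((a, 0) + (0, a))"
      by (simp add: dir_deriv_eq[OF has_derivative_diagonal[OF \<Phi>']])
    also have "\<dots> = \<Phi>' (a, 0) + \<Phi>' (0, a)"
      by (rule linear_add[OF has_derivative_linear[OF \<Phi>']])
    finally show ?thesis
      by (simp add: dir_deriv_eq[OF \<Phi>'])
  qed
  then show ?thesis
    by (simp add: Lop_def dtaubar_def du_dv_line_deriv dcomb_def field_simps)
qed

section \<open>The Cohen operator and the raising and lowering operators\<close>

lemma in1_Rpow_in2_Lop:
  assumes g: "smooth_on (uhp \<times> uhp) g" and y: "y \<in> uhp \<times> uhp"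
  shows "in1 (Rpow j k) (in2 Lop g) y = - 2 * \<i> * (im2 y)\<^sup>2
    * (\<Sum>r=0..j. Rpow_coeff j (of_int k) r * (inverse (im1 y) ^ (j - r) * (dz e1 f1 ^^ r) (dzbar e2 f2 g) y))"
proof -
  define \<beta> where "\<beta> z = - 2 * \<i> * (im2 z * im2 z)" for z
  have diff_im2: "im2 differentiable at z" for z
    by (rule differentiableI[OF has_derivative_im2])
  have diff_\<beta>: "\<beta> differentiable at z" for z
    unfolding \<beta>_def by (intro differentiable_mult differentiable_const diff_im2)
  have hol: "dz e1 f1 \<beta> z = 0" if "z \<in> uhp \<times> uhp" for z
    unfolding \<beta>_def dcomb_cmult[OF differentiable_mult[OF diff_im2 diff_im2]]
      dcomb_mult[OF diff_im2 diff_im2] tau2.dcomb_w_other[OF that] by simp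
  have Lop_g: "in2 Lop g z = \<beta> z * dzbar e2 f2 g z" if "z \<in> uhp \<times> uhp" for z
    using in2_Lop[OF that _ smooth_on_differentiable[OF open_uhp_times_uhp g that]]
    by (simp add: \<beta>_def power2_eq_square)
  have "in1 (Rpow j k) (in2 Lop g) y = Rline_pow e1 f1 im1 j k (in2 Lop g) y"
    by (simp add: in1_Rpow)
  also have "\<dots> = \<beta> y * (\<Sum>r=0..j. Rpow_coeff j (of_int k) r
      * (inverse (im1 y) ^ (j - r) * (dz e1 f1 ^^ r) (dzbar e2 f2 g) y))"
    by (rule tau1.Rline_pow_expansion[OF smooth_on_dcomb[OF open_uhp_times_uhp g] diff_\<beta> hol Lop_g y])
  finally show ?thesis
    by (simp add: \<beta>_def power2_eq_square)
qed

lemma in1_Lop_in2_Rpow: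
  assumes g: "smooth_on (uhp \<times> uhp) g" and y: "y \<in> uhp \<times> uhp"
  shows "in1 Lop (in2 (Rpow j k) g) y = - 2 * \<i> * (im1 y)\<^sup>2
    * (\<Sum>r=0..j. Rpow_coeff j (of_int k) r * (inverse (im2 y) ^ (j - r) * (dz e2 f2 ^^ r) (dzbar e1 f1 g) y))"
proof -
  define T where "T r z = inverse (im2 z) ^ (j - r) * (dz e2 f2 ^^ r) g z" for r z
  have diff: "(dz e2 f2 ^^ r) g differentiable at y" for r
    by (rule smooth_on_differentiable[OF open_uhp_times_uhp smooth_on_dcomb_power[OF open_uhp_times_uhp g] y])
  have diff_T: "T r differentiable at y" for r
    unfolding T_def by (intro differentiable_mult tau2.differentiable_inverse_power_w y diff)
  have "in2 (Rpow j k) g z = (\<Sum>r=0..j. Rpow_coeff j (of_int k) r * T r z)" if "z \<in> uhp \<times> uhp" for z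
    using tau2.Rline_pow_expansion[where \<beta> = "\<lambda>_. 1" and M = g, OF g _ _ _ that]
    by (simp add: in2_Rpow T_def dcomb_const)
  then have "in1 Lop (in2 (Rpow j k) g) y
      = - 2 * \<i> * (im1 y)\<^sup>2 * dzbar e1 f1 (\<lambda>z. \<Sum>r=0..j. Rpow_coeff j (of_int k) r * T r z) y"
    using diff_T by (intro in1_Lop[OF y]) (auto intro!: differentiable_sum differentiable_mult)
  moreover have "dzbar e1 f1 (T r) y = inverse (im2 y) ^ (j - r) * (dz e2 f2 ^^ r) (dzbar e1 f1 g) y" for r
    unfolding T_def tau2.dcomb_inverse_power_mult(2)[OF diff y]
      dcomb_power_commute[OF open_uhp_times_uhp g y] ..
  ultimately show ?thesis
    by (simp add: dcomb_sum_cmult[OF diff_T])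
qed

lemma Lop_cohen:
  assumes g: "smooth_on (uhp \<times> uhp) g" and z: "z \<in> uhp"
  shows "(- 4 * of_real pi) ^ j * Lop (cohen k1 k2 j g) z = - 2 * \<i> * of_real ((Im z)\<^sup>2) * (2 * \<i>) ^ j
    * (\<Sum>s=0..j. (-1) ^ s * ((of_int (k1 + int j - 1) :: complex) gchoose s)
        * ((of_int (k2 + int j - 1) :: complex) gchoose (j - s))
        * (dzbar e1 f1 ((dz e1 f1 ^^ (j - s)) ((dz e2 f2 ^^ s) g)) (z, z)
           + dzbar e2 f2 ((dz e1 f1 ^^ (j - s)) ((dz e2 f2 ^^ s) g)) (z, z)))"
proof -
  define c where "c s = (-1) ^ s * ((of_int (k1 + int j - 1) :: complex) gchoose s)
    * ((of_int (k2 + int j - 1) :: complex) gchoose (j - s))" for s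
  define G where "G s = (dz e1 f1 ^^ (j - s)) ((dz e2 f2 ^^ s) g)" for s
  define K where "K = (2 * of_real pi * \<i> :: complex) powi (- int j)"
  have diff_G: "G s differentiable at (z, z)" for s
    unfolding G_def using z
    by (intro smooth_on_differentiable[OF open_uhp_times_uhp] smooth_on_dcomb_power open_uhp_times_uhp g) simp
  have diff_sum: "(\<lambda>y. \<Sum>s=0..j. c s * G s y) differentiable at (z, z)"
    using diff_G by (auto intro!: differentiable_sum differentiable_mult)
  have "(in2 dtau ^^ s) g y = (dz e2 f2 ^^ s) g y" if "y \<in> uhp \<times> uhp" for s y
    by (rule in2_dtau_power[OF g _ that]) simp
  then have "(in1 dtau ^^ (j - s)) ((in2 dtau ^^ s) g) y = G s y" if "y \<in> uhp \<times> uhp" for s y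
    unfolding G_def by (rule in1_dtau_power[OF smooth_on_dcomb_power[OF open_uhp_times_uhp g] _ that])
  then have "cohen k1 k2 j g z' = K * (\<Sum>s=0..j. c s * G s (z', z'))" if "z' \<in> uhp" for z'
    using that by (simp add: cohen_def K_def c_def)
  then have "Lop (cohen k1 k2 j g) z
      = - 2 * \<i> * of_real ((Im z)\<^sup>2) * (dzbar e1 f1 (\<lambda>y. K * (\<Sum>s=0..j. c s * G s y)) (z, z)
        + dzbar e2 f2 (\<lambda>y. K * (\<Sum>s=0..j. c s * G s y)) (z, z))"
    using diff_sum by (intro Lop_diagonal[OF _ z]) auto
  also have "\<dots> = - 2 * \<i> * of_real ((Im z)\<^sup>2) * K
      * (\<Sum>s=0..j. c s * (dzbar e1 f1 (G s) (z, z) + dzbar e2 f2 (G s) (z, z)))"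
    unfolding dcomb_cmult[OF diff_sum] dcomb_sum_cmult[OF diff_G]
    by (simp add: algebra_simps sum.distrib)
  finally have "(- 4 * of_real pi) ^ j * Lop (cohen k1 k2 j g) z = - 2 * \<i> * of_real ((Im z)\<^sup>2)
      * ((- 4 * of_real pi) ^ j * K) * (\<Sum>s=0..j. c s * (dzbar e1 f1 (G s) (z, z) + dzbar e2 f2 (G s) (z, z)))"
    by (simp only: mult_ac)
  then show ?thesis
    unfolding K_def minus_four_pi_power_cohen_factor by (simp add: c_def G_def)
qed

lemma cohen_Lop_identity:
  assumes g: "smooth_on (uhp \<times> uhp) g"
    and Delta1: "\<forall>z1\<in>uhp. \<forall>z2\<in>uhp. in1 (Delta k1) g (z1, z2) = 0"
    and Delta2: "\<forall>z1\<in>uhp. \<forall>z2\<in>uhp. in2 (Delta k2) g (z1, z2) = 0"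
    and z: "z \<in> uhp"
  shows "(- 4 * of_real pi) ^ j * Lop (cohen k1 k2 j g) z
      = ((of_int (k2 + int j - 1) :: complex) gchoose j) * in1 (Rpow j k1) (in2 Lop g) (z, z)
        + (-1) ^ j * ((of_int (k1 + int j - 1) :: complex) gchoose j) * in1 Lop (in2 (Rpow j k2) g) (z, z)"
proof -
  have y: "(z, z) \<in> uhp \<times> uhp"
    using z by simp
  define v where "v = inverse (complex_of_real (Im z))"
  define A where "A r = (dz e1 f1 ^^ r) (dzbar e2 f2 g) (z, z)" for r
  define B where "B s = (dz e2 f2 ^^ s) (dzbar e1 f1 g) (z, z)" for s
  have im: "im1 (z, z) = complex_of_real (Im z)" "im2 (z, z) = complex_of_real (Im z)"
    by (simp_all add: im1_def im2_def)
  have gchoose_arg: "(of_int (k + int j - 1) :: complex) = of_int k + of_nat j - 1" for k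
    by simp
  have "(- 4 * of_real pi) ^ j * Lop (cohen k1 k2 j g) z = - 2 * \<i> * of_real ((Im z)\<^sup>2)
      * ((2 * \<i>) ^ j * (\<Sum>s=0..j. (-1) ^ s * ((of_int k1 + of_nat j - 1) gchoose s)
            * ((of_int k2 + of_nat j - 1) gchoose (j - s))
            * ((\<i> / 2) ^ (j - s) * pochhammer (of_int k1) (j - s) * (v ^ (j - s) * B s)))
        + (2 * \<i>) ^ j * (\<Sum>s=0..j. (-1) ^ s * ((of_int k1 + of_nat j - 1) gchoose s)
            * ((of_int k2 + of_nat j - 1) gchoose (j - s))
            * ((\<i> / 2) ^ s * pochhammer (of_int k2) s * (v ^ s * A (j - s)))))"
    unfolding Lop_cohen[OF g z] gchoose_arg
      tau1.dzbar_dz_power_dcomb_power[OF g in1_Delta_annihilated[OF g Delta1] y]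
      tau2.dzbar_dcomb_power_dz_power[OF g in2_Delta_annihilated[OF g Delta2] y]
      im A_def[symmetric] B_def[symmetric] v_def[symmetric]
    by (simp add: distrib_left sum.distrib mult_ac)
  also have "\<dots> = ((of_int k2 + of_nat j - 1) gchoose j) * in1 (Rpow j k1) (in2 Lop g) (z, z)
      + (-1) ^ j * ((of_int k1 + of_nat j - 1) gchoose j) * in1 Lop (in2 (Rpow j k2) g) (z, z)"
    unfolding cohen_coeff_sum_first cohen_coeff_sum_second in1_Rpow_in2_Lop[OF g y] in1_Lop_in2_Rpow[OF g y]
      im A_def[symmetric] B_def[symmetric] v_def[symmetric]
    by (simp add: algebra_simps)
  finally show ?thesis
    unfolding gchoose_arg .
qed

theorem proposition5p8:
  fixes d :: nat and k1 k2 :: int and G :: "mat2 set"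
    and g :: "complex \<times> complex \<Rightarrow> complex"
  assumes "real_quadratic_param d"
    and "congruence_subgroup d G"
    and "smooth_HMF d k1 k2 G g"
    and "\<forall>z1\<in>uhp. \<forall>z2\<in>uhp. in1 (Delta k1) g (z1, z2) = 0"
    and "\<forall>z1\<in>uhp. \<forall>z2\<in>uhp. in2 (Delta k2) g (z1, z2) = 0"
  shows "\<forall>j::nat. \<forall>z\<in>uhp.
    (- 4 * of_real pi) ^ j * Lop (cohen k1 k2 j g) z
      = ((of_int (k2 + int j - 1) :: complex) gchoose j)
          * in1 (Rpow j k1) (in2 Lop g) (z, z)
        + (-1) ^ j * ((of_int (k1 + int j - 1) :: complex) gchoose j)
          * in1 Lop (in2 (Rpow j k2) g) (z, z)"
proof -
  have "smooth_on (uhp \<times> uhp) g"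
    using assms(3) by (simp add: smooth_HMF_def)
  then show ?thesis
    using cohen_Lop_identity[of g k1 k2] assms(4,5) by blast
qed

end
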